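(* Let $\mathcal{H}$ be a real Hilbert space, let $A:\mathcal{H}\rightrightarrows\mathcal{H}$ be maximal monotone with $A^{-1}(0)\neq\emptyset$, let $\theta>0$, let $p\geq1$ be an integer, and let $x_0\in\Omega:=\{x\in\mathcal{H}:0\notin Ax\}$. Then the closed-loop control system \[ \dot{x}(t)+x(t)-(I+\lambda(t)A)^{-1}x(t)=0,\qquad \lambda(t)\,\|(I+\lambda(t)A)^{-1}x(t)-x(t)\|^{p-1}=\theta,\qquad x(0)=x_0, \] has a unique global solution $(x,\lambda):[0,+\infty)\to\mathcal{H}\times(0,+\infty)$, with $x(\cdot)$ continuously differentiable and $\lambda(\cdot)$ locally Lipschitz continuous. If $p\geq 2$, then \[ \|x(t)-(I+\lambda(t)A)^{-1}x(t)\|\geq \|x(0)-(I+\lambda(0)A)^{-1}x(0)\|\,e^{-t}\quad\text{for all } t\geq 0. \]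
   Context: $(I+\lambda A)^{-1}$ denotes the resolvent of the maximal monotone operator $A$ with index $\lambda>0$; $A^{-1}(0)=\{x\in\mathcal{H}:0\in Ax\}$. *)

theory Defs
  imports "HOL-Analysis.Analysis"
begin

definition monotone_op :: "('a::real_inner \<Rightarrow> 'a set) \<Rightarrow> bool" where
  "monotone_op A \<longleftrightarrow>
     (\<forall>x y u v. u \<in> A x \<longrightarrow> v \<in> A y \<longrightarrow> inner (x - y) (u - v) \<ge> 0)"

definition maximal_monotone :: "('a::real_inner \<Rightarrow> 'a set) \<Rightarrow> bool" where
  "maximal_monotone A \<longleftrightarrow> monotone_op A \<and>
     (\<forall>x u. (\<forall>y v. v \<in> A y \<longrightarrow> inner (x - y) (u - v) \<ge> 0) \<longrightarrow> u \<in> A x)"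

text \<open>Resolvent (I + lam A)^{-1} x: the unique y with x \<in> y + lam A y.\<close>
definition resolvent :: "('a::real_inner \<Rightarrow> 'a set) \<Rightarrow> real \<Rightarrow> 'a \<Rightarrow> 'a" where
  "resolvent A lam x = (THE y. (1 / lam) *\<^sub>R (x - y) \<in> A y)"

definition locally_lipschitz_on :: "real set \<Rightarrow> (real \<Rightarrow> real) \<Rightarrow> bool" where
  "locally_lipschitz_on S f \<longleftrightarrow>
     (\<forall>t\<in>S. \<exists>e>0. \<exists>L. L-lipschitz_on (cball t e \<inter> S) f)"

definition is_cl_solution ::
  "('a::real_inner \<Rightarrow> 'a set) \<Rightarrow> real \<Rightarrow> nat \<Rightarrow> 'a \<Rightarrow> (real \<Rightarrow> 'a) \<Rightarrow> (real \<Rightarrow> real) \<Rightarrow> bool" where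
  "is_cl_solution A \<theta> p x0 x lam \<longleftrightarrow>
     (\<exists>x'. (\<forall>t\<ge>0. (x has_vector_derivative x' t) (at t within {0..})) \<and>
           continuous_on {0..} x' \<and>
           (\<forall>t\<ge>0. x' t + x t - resolvent A (lam t) (x t) = 0)) \<and>
     (\<forall>t\<ge>0. lam t > 0) \<and>
     locally_lipschitz_on {0..} lam \<and>
     (\<forall>t\<ge>0. lam t * norm (resolvent A (lam t) (x t) - x t) ^ (p - 1) = \<theta>) \<and>
     x 0 = x0"

end

theory Submission
  imports Defs
begin

text \<open>By Minty's theorem the resolvents \<open>J\<^sub>\<lambda> = (I + \<lambda>A)\<^sup>-\<^sup>1\<close> are everywhere defined and
  firmly nonexpansive, and the residual \<open>\<parallel>x - J\<^sub>\<lambda> x\<parallel>\<close> is nondecreasing and Lipschitz in \<open>\<lambda>\<close>.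
  Hence, off \<open>A\<^sup>-\<^sup>1(0)\<close>, the feedback law \<open>\<lambda> \<parallel>x - J\<^sub>\<lambda> x\<parallel>\<^sup>p\<^sup>-\<^sup>1 = \<theta>\<close> has a unique root
  \<open>\<lambda>(x)\<close>, and capping this root at a level \<open>M\<close> makes it Lipschitz in \<open>x\<close> on bounded sets.

  Along a solution the distance to a zero \<open>z\<close> of \<open>A\<close> does not increase, and the residual
  \<open>g(t)\<close> can drop at most by the distance travelled, while the speed is \<open>g(t)\<close> itself; hence
  \<open>g(t) \<ge> g(0) e\<^sup>-\<^sup>t\<close>. This bounds \<open>\<lambda>(t)\<close> on \<open>[0, T]\<close> below a level that a cap chosen in
  terms of \<open>T\<close> never reaches, so there the closed-loop system is an ODE whose field, after
  retracting onto the ball about \<open>z\<close>, is globally Lipschitz: Picard iteration solves it and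
  Gronwall's inequality makes the solution unique. Solutions for growing \<open>T\<close> glue to the
  global one.\<close>

section \<open>Picard iteration\<close>

primrec picard_iterate :: "('a::banach \<Rightarrow> 'a) \<Rightarrow> 'a \<Rightarrow> nat \<Rightarrow> real \<Rightarrow> 'a" where
  "picard_iterate G x0 0 = (\<lambda>t. x0)"
| "picard_iterate G x0 (Suc n) = (\<lambda>t. x0 + integral {0..t} (\<lambda>s. G (picard_iterate G x0 n s)))"

lemma continuous_on_picard_iterate:
  assumes "continuous_on UNIV G"
  shows "continuous_on {0..b} (picard_iterate G x0 n)"
proof (induction n)
  case (Suc n)
  have "continuous_on {0..b} (\<lambda>s. G (picard_iterate G x0 n s))"
    using continuous_on_compose2[OF assms Suc] by simp
  then have "continuous_on {0..b} (\<lambda>t. integral {0..t} (\<lambda>s. G (picard_iterate G x0 n s)))"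
    by (intro indefinite_integral_continuous_1 integrable_continuous_real)
  then show ?case by (simp add: continuous_on_add)
qed simp

lemma has_integral_monomial:
  assumes "0 \<le> t"
  shows "((\<lambda>s. c * s ^ k) has_integral c * t ^ Suc k / Suc k) {0..t}"
proof -
  have "((\<lambda>s. c * s ^ k) has_integral c * t ^ Suc k / Suc k - c * 0 ^ Suc k / Suc k) {0..t}"
  proof (rule fundamental_theorem_of_calculus[OF assms])
    fix s :: real
    have "((\<lambda>s. c * s ^ Suc k / Suc k) has_real_derivative c * s ^ k) (at s within {0..t})"
      using DERIV_cdivide[OF DERIV_cmult[OF DERIV_pow[of "Suc k" s "{0..t}"]], of c "Suc k"]
      by (simp del: of_nat_Suc)
    then show "((\<lambda>s. c * s ^ Suc k / Suc k) has_vector_derivative c * s ^ k) (at s within {0..t})"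
      by (simp add: has_real_derivative_iff_has_vector_derivative)
  qed
  then show ?thesis by simp
qed

lemma picard_iterate_step_bound:
  assumes G: "L-lipschitz_on UNIV G" and "0 \<le> t"
  shows "norm (picard_iterate G x0 (Suc n) t - picard_iterate G x0 n t)
           \<le> norm (G x0) * L ^ n * t ^ Suc n / fact (Suc n)"
  using \<open>0 \<le> t\<close>
proof (induction n arbitrary: t)
  case 0
  then show ?case by simp
next
  case (Suc n)
  let ?P = "picard_iterate G x0" and ?c = "norm (G x0) * L ^ Suc n / fact (Suc n)"
  have Gc: "continuous_on UNIV G" by (rule lipschitz_on_continuous_on[OF G])
  have int: "(\<lambda>s. G (?P k s)) integrable_on {0..t}" for k
    by (intro integrable_continuous_real continuous_on_compose2[OF Gc continuous_on_picard_iterate[OF Gc]])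
      auto
  have step: "?P (Suc k) t = x0 + integral {0..t} (\<lambda>s. G (?P k s))" for k
    by simp
  have "norm (?P (Suc (Suc n)) t - ?P (Suc n) t)
      = norm (integral {0..t} (\<lambda>s. G (?P (Suc n) s) - G (?P n s)))"
    by (simp only: step[of "Suc n"] step[of n] add_diff_cancel_left integral_diff[OF int int])
  also have "\<dots> \<le> integral {0..t} (\<lambda>s. ?c * s ^ Suc n)"
  proof (rule integral_norm_bound_integral[OF integrable_diff[OF int int]])
    show "(\<lambda>s. ?c * s ^ Suc n) integrable_on {0..t}"
      using has_integral_monomial[OF Suc.prems] by blast
    fix s assume s: "s \<in> {0..t}"
    have "norm (G (?P (Suc n) s) - G (?P n s)) \<le> L * norm (?P (Suc n) s - ?P n s)"
      using lipschitz_onD[OF G] by (simp add: dist_norm)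
    also have "\<dots> \<le> L * (norm (G x0) * L ^ n * s ^ Suc n / fact (Suc n))"
      by (rule mult_left_mono[OF Suc.IH]) (use s lipschitz_on_nonneg[OF G] in auto)
    finally show "norm (G (?P (Suc n) s) - G (?P n s)) \<le> ?c * s ^ Suc n"
      by (simp add: field_simps)
  qed
  also have "\<dots> = ?c * t ^ Suc (Suc n) / Suc (Suc n)"
    using has_integral_monomial[OF Suc.prems] by (rule integral_unique)
  also have "\<dots> = norm (G x0) * L ^ Suc n * t ^ Suc (Suc n) / fact (Suc (Suc n))"
    by (simp add: field_simps del: of_nat_Suc)
  finally show ?case .
qed

definition picard_limit :: "('a::banach \<Rightarrow> 'a) \<Rightarrow> 'a \<Rightarrow> real \<Rightarrow> 'a" where
  "picard_limit G x0 t = x0 + (\<Sum>k. picard_iterate G x0 (Suc k) t - picard_iterate G x0 k t)"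

lemma uniform_limit_picard_iterate:
  assumes G: "L-lipschitz_on UNIV G"
  shows "uniform_limit {0..T} (picard_iterate G x0) (picard_limit G x0) sequentially"
proof -
  let ?P = "picard_iterate G x0" and ?C = "norm (G x0) * \<bar>T\<bar>"
  have L: "0 \<le> L" by (rule lipschitz_on_nonneg[OF G])
  have bound: "norm (?P (Suc k) t - ?P k t) \<le> ?C * (inverse (fact k) * (L * \<bar>T\<bar>) ^ k)"
    if t: "t \<in> {0..T}" for k t
  proof -
    have "norm (?P (Suc k) t - ?P k t) \<le> norm (G x0) * L ^ k * t ^ Suc k / fact (Suc k)"
      using picard_iterate_step_bound[OF G] t by simp
    also have "\<dots> \<le> norm (G x0) * L ^ k * \<bar>T\<bar> ^ Suc k / fact k"
      using t L by (intro frac_le mult_left_mono power_mono fact_mono) auto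
    also have "\<dots> = ?C * (inverse (fact k) * (L * \<bar>T\<bar>) ^ k)"
      by (simp add: field_simps power_mult_distrib)
    finally show ?thesis .
  qed
  have "uniform_limit {0..T} (\<lambda>n t. x0 + (\<Sum>k<n. ?P (Suc k) t - ?P k t)) (picard_limit G x0)
      sequentially"
    unfolding picard_limit_def
    by (intro uniform_limit_intros Weierstrass_m_test[OF bound] summable_mult summable_exp)
  moreover have "x0 + (\<Sum>k<n. ?P (Suc k) t - ?P k t) = ?P n t" for n t
    using sum_lessThan_telescope[of "\<lambda>k. ?P k t" n] by simp
  ultimately show ?thesis by simp
qed

lemma picard_limit_integral_eq:
  assumes G: "L-lipschitz_on UNIV G" and t: "0 \<le> t"
  shows "picard_limit G x0 t = x0 + integral {0..t} (\<lambda>s. G (picard_limit G x0 s))"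
proof -
  let ?P = "picard_iterate G x0" and ?x = "picard_limit G x0"
  have Gc: "continuous_on UNIV G" by (rule lipschitz_on_continuous_on[OF G])
  note lim = uniform_limit_picard_iterate[OF G, where T = t and ?x0.0 = x0]
  have "uniform_limit {0..t} (\<lambda>n s. G (?P n s)) (\<lambda>s. G (?x s)) sequentially"
    by (rule uniform_limit_compose_uniformly_continuous_on[OF lim
          lipschitz_on_uniformly_continuous[OF G]]) auto
  then obtain I J where I: "\<And>n. ((\<lambda>s. G (?P n s)) has_integral I n) {0..t}"
    and J: "((\<lambda>s. G (?x s)) has_integral J) {0..t}" and IJ: "I \<longlonglongrightarrow> J"
    by (rule uniform_limit_integral)
      (auto intro: continuous_on_compose2[OF Gc continuous_on_picard_iterate[OF Gc]])
  have "(\<lambda>n. ?P (Suc n) t) = (\<lambda>n. x0 + I n)"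
    using integral_unique[OF I] by simp
  then have "(\<lambda>n. ?P (Suc n) t) \<longlonglongrightarrow> x0 + J"
    using tendsto_add[OF tendsto_const IJ] by simp
  moreover have "(\<lambda>n. ?P (Suc n) t) \<longlonglongrightarrow> ?x t"
    by (rule LIMSEQ_Suc[OF tendsto_uniform_limitI[OF lim]]) (use t in auto)
  ultimately show ?thesis
    using LIMSEQ_unique J by (simp add: integral_unique)
qed

theorem lipschitz_ode_exists_banach:
  fixes G :: "'a::banach \<Rightarrow> 'a"
  assumes G: "L-lipschitz_on UNIV G"
  obtains x where "x 0 = x0" and "\<And>t. 0 \<le> t \<Longrightarrow> (x has_vector_derivative G (x t)) (at t within {0..})"
proof
  let ?x = "picard_limit G x0"
  show "?x 0 = x0" using picard_limit_integral_eq[OF G, of 0] by simp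
  fix t :: real assume t: "0 \<le> t"
  have Gc: "continuous_on UNIV G" by (rule lipschitz_on_continuous_on[OF G])
  have "continuous_on {0..t+1} ?x"
    by (rule uniform_limit_theorem[OF _ uniform_limit_picard_iterate[OF G]])
      (simp_all add: continuous_on_picard_iterate[OF Gc])
  then have "((\<lambda>u. x0 + integral {0..u} (\<lambda>s. G (?x s))) has_vector_derivative G (?x t))
      (at t within {0..t+1})"
    using t continuous_on_compose2[OF Gc]
    by (auto intro!: derivative_eq_intros integral_has_vector_derivative)
  then have "(?x has_vector_derivative G (?x t)) (at t within {0..t+1})"
    by (rule has_vector_derivative_transform[rotated 2])
      (use t picard_limit_integral_eq[OF G] in auto)
  moreover have "at t within {0..t+1} = at t within {0..}"
    by (rule at_within_nhd[where S="{t - 1 <..< t + 1}"]) auto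
  ultimately show "(?x has_vector_derivative G (?x t)) (at t within {0..})" by simp
qed

text \<open>A type of sort \<open>{real_normed_vector, complete_space}\<close> is not of class \<open>banach\<close>, on
  which the integration library is stated; the following copy of the type is.\<close>

typedef 'a as_banach = "UNIV :: 'a::{real_normed_vector, complete_space} set" by simp

setup_lifting type_definition_as_banach

instantiation as_banach :: ("{real_normed_vector, complete_space}") real_normed_vector
begin

lift_definition zero_as_banach :: "'a as_banach" is 0 .
lift_definition plus_as_banach :: "'a as_banach \<Rightarrow> 'a as_banach \<Rightarrow> 'a as_banach" is "(+)" .
lift_definition minus_as_banach :: "'a as_banach \<Rightarrow> 'a as_banach \<Rightarrow> 'a as_banach" is "(-)" .
lift_definition uminus_as_banach :: "'a as_banach \<Rightarrow> 'a as_banach" is uminus .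
lift_definition scaleR_as_banach :: "real \<Rightarrow> 'a as_banach \<Rightarrow> 'a as_banach" is scaleR .
lift_definition norm_as_banach :: "'a as_banach \<Rightarrow> real" is norm .
lift_definition sgn_as_banach :: "'a as_banach \<Rightarrow> 'a as_banach" is sgn .
lift_definition dist_as_banach :: "'a as_banach \<Rightarrow> 'a as_banach \<Rightarrow> real" is dist .

definition uniformity_as_banach :: "('a as_banach \<times> 'a as_banach) filter" where
  "uniformity_as_banach = (INF e\<in>{0 <..}. principal {(x, y). dist x y < e})"

definition open_as_banach :: "'a as_banach set \<Rightarrow> bool" where
  "open_as_banach U = (\<forall>x\<in>U. eventually (\<lambda>(x', y). x' = x \<longrightarrow> y \<in> U) uniformity)"

instance
proof
  fix a b c :: "'a as_banach" and r s :: real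
  show "a + b + c = a + (b + c)" by transfer (rule add.assoc)
  show "a + b = b + a" by transfer (rule add.commute)
  show "0 + a = a" by transfer simp
  show "- a + a = 0" by transfer simp
  show "a - b = a + - b" by transfer simp
  show "r *\<^sub>R (a + b) = r *\<^sub>R a + r *\<^sub>R b" by transfer (rule scaleR_add_right)
  show "(r + s) *\<^sub>R a = r *\<^sub>R a + s *\<^sub>R a" by transfer (rule scaleR_add_left)
  show "r *\<^sub>R s *\<^sub>R a = (r * s) *\<^sub>R a" by transfer simp
  show "1 *\<^sub>R a = a" by transfer simp
  show "sgn a = inverse (norm a) *\<^sub>R a" by transfer (rule sgn_div_norm)
  show "dist a b = norm (a - b)" by transfer (rule dist_norm)
  show "norm a = 0 \<longleftrightarrow> a = 0" by transfer simp
  show "norm (a + b) \<le> norm a + norm b" by transfer (rule norm_triangle_ineq)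
  show "norm (r *\<^sub>R a) = \<bar>r\<bar> * norm a" by transfer simp
qed (simp_all add: uniformity_as_banach_def open_as_banach_def)

end

instance as_banach :: ("{real_normed_vector, complete_space}") banach
proof
  fix X :: "nat \<Rightarrow> 'a as_banach"
  assume "Cauchy X"
  then have "Cauchy (\<lambda>n. Rep_as_banach (X n))"
    unfolding Cauchy_def by (simp add: dist_as_banach.rep_eq)
  then obtain L where "(\<lambda>n. Rep_as_banach (X n)) \<longlonglongrightarrow> L"
    using Cauchy_convergent convergent_def by blast
  then have "X \<longlonglongrightarrow> Abs_as_banach L"
    unfolding lim_sequentially by (simp add: dist_as_banach.rep_eq Abs_as_banach_inverse)
  then show "convergent X" by (auto simp: convergent_def)
qed

lemma bounded_linear_Rep_as_banach: "bounded_linear Rep_as_banach"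
  by (rule bounded_linear_intro[where K=1])
    (simp_all add: plus_as_banach.rep_eq scaleR_as_banach.rep_eq norm_as_banach.rep_eq)

theorem lipschitz_ode_exists:
  fixes G :: "'a::{real_normed_vector, complete_space} \<Rightarrow> 'a"
  assumes G: "L-lipschitz_on UNIV G"
  obtains x where "x 0 = x0" and "\<And>t. 0 \<le> t \<Longrightarrow> (x has_vector_derivative G (x t)) (at t within {0..})"
proof -
  define G' where "G' a = Abs_as_banach (G (Rep_as_banach a))" for a
  have "L-lipschitz_on UNIV G'"
    using G unfolding lipschitz_on_def
    by (simp add: G'_def dist_as_banach.rep_eq Abs_as_banach_inverse)
  then obtain y where y0: "y 0 = Abs_as_banach x0"
    and y: "\<And>t. 0 \<le> t \<Longrightarrow> (y has_vector_derivative G' (y t)) (at t within {0..})"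
    using lipschitz_ode_exists_banach[where ?x0.0="Abs_as_banach x0"] by blast
  show ?thesis
  proof
    show "Rep_as_banach (y 0) = x0" by (simp add: y0 Abs_as_banach_inverse)
    fix t :: real assume "0 \<le> t"
    from bounded_linear.has_vector_derivative[OF bounded_linear_Rep_as_banach y[OF this]]
    show "((\<lambda>t. Rep_as_banach (y t)) has_vector_derivative G (Rep_as_banach (y t)))
        (at t within {0..})"
      by (simp add: G'_def Abs_as_banach_inverse)
  qed
qed

section \<open>Minty's theorem\<close>

lemma monotone_opD:
  "monotone_op A \<Longrightarrow> u \<in> A x \<Longrightarrow> v \<in> A y \<Longrightarrow> 0 \<le> inner (x - y) (u - v)"
  unfolding monotone_op_def by blast

lemma maximal_monotoneD:
  "maximal_monotone A \<Longrightarrow> (\<And>y v. v \<in> A y \<Longrightarrow> 0 \<le> inner (x - y) (u - v)) \<Longrightarrow> u \<in> A x"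
  unfolding maximal_monotone_def by blast

lemma maximal_monotone_imp_monotone_op: "maximal_monotone A \<Longrightarrow> monotone_op A"
  unfolding maximal_monotone_def by blast

lemma maximal_monotone_nonempty:
  assumes "maximal_monotone A"
  shows "\<exists>y v. v \<in> A y"
proof (rule ccontr)
  assume empty: "\<not> (\<exists>y v. v \<in> A y)"
  then have "0 \<in> A 0" by (intro maximal_monotoneD[OF assms]) auto
  with empty show False by blast
qed

definition op_graph :: "('a \<Rightarrow> 'b set) \<Rightarrow> ('a \<times> 'b) set" where
  "op_graph B = {(y, v). v \<in> B y}"

definition fitzpatrick_term :: "'a::real_inner \<times> 'a \<Rightarrow> 'a \<times> 'a \<Rightarrow> real" where
  "fitzpatrick_term w p = inner (fst w) (snd p) + inner (fst p) (snd w) - inner (fst p) (snd p)"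

text \<open>Minty's theorem is proved with the Fitzpatrick function \<open>F\<close> of \<open>B\<close>: it is convex,
  majorizes the pairing \<open>\<langle>x, u\<rangle>\<close> and equals it on the graph. A minimizer \<open>(x, u)\<close> of
  \<open>F w + \<parallel>w\<parallel>\<^sup>2 / 2\<close>, which exists by strong convexity and completeness, satisfies
  \<open>u = - x \<in> B x\<close>. \<open>F\<close> is \<open>+\<infinity>\<close> outside \<open>fitzpatrick_dom\<close>, where the real-valued supremum
  below is meaningless.\<close>

definition fitzpatrick_dom :: "('a::real_inner \<Rightarrow> 'a set) \<Rightarrow> ('a \<times> 'a) set" where
  "fitzpatrick_dom B = {w. bdd_above (fitzpatrick_term w ` op_graph B)}"

definition fitzpatrick :: "('a::real_inner \<Rightarrow> 'a set) \<Rightarrow> 'a \<times> 'a \<Rightarrow> real" where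
  "fitzpatrick B w = (SUP p\<in>op_graph B. fitzpatrick_term w p)"

lemma fitzpatrick_term_le:
  "w \<in> fitzpatrick_dom B \<Longrightarrow> p \<in> op_graph B \<Longrightarrow> fitzpatrick_term w p \<le> fitzpatrick B w"
  unfolding fitzpatrick_def fitzpatrick_dom_def by (auto intro: cSUP_upper)

lemma fitzpatrick_domI:
  "(\<And>p. p \<in> op_graph B \<Longrightarrow> fitzpatrick_term w p \<le> K) \<Longrightarrow> w \<in> fitzpatrick_dom B"
  unfolding fitzpatrick_dom_def by (rule CollectI, rule bdd_aboveI2)

lemma fitzpatrick_least:
  "op_graph B \<noteq> {} \<Longrightarrow> (\<And>p. p \<in> op_graph B \<Longrightarrow> fitzpatrick_term w p \<le> K) \<Longrightarrow>
    fitzpatrick B w \<le> K"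
  unfolding fitzpatrick_def by (rule cSUP_least)

lemma inner_diff_eq_fitzpatrick_term:
  "inner (fst w - fst p) (snd w - snd p) = inner (fst w) (snd w) - fitzpatrick_term w p"
  by (simp add: fitzpatrick_term_def inner_diff_left inner_diff_right inner_commute[of "fst p" "snd w"])

lemma fitzpatrick_ge_pairing:
  assumes B: "maximal_monotone B" and w: "w \<in> fitzpatrick_dom B"
  shows "inner (fst w) (snd w) \<le> fitzpatrick B w"
proof (rule ccontr)
  assume less: "\<not> ?thesis"
  have "snd w \<in> B (fst w)"
  proof (rule maximal_monotoneD[OF B])
    fix y v assume "v \<in> B y"
    then have "fitzpatrick_term w (y, v) < inner (fst w) (snd w)"
      using fitzpatrick_term_le[OF w, of "(y, v)"] less by (simp add: op_graph_def)
    then show "0 \<le> inner (fst w - y) (snd w - v)"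
      using inner_diff_eq_fitzpatrick_term[of w "(y, v)"] by simp
  qed
  then have "fitzpatrick_term w w \<le> fitzpatrick B w"
    by (intro fitzpatrick_term_le[OF w]) (simp add: op_graph_def case_prod_beta)
  with less show False
    using inner_diff_eq_fitzpatrick_term[of w w] by simp
qed

lemma fitzpatrick_on_graph:
  assumes B: "monotone_op B" and p: "p \<in> op_graph B"
  shows "p \<in> fitzpatrick_dom B" and "fitzpatrick B p = inner (fst p) (snd p)"
proof -
  have le: "fitzpatrick_term p q \<le> inner (fst p) (snd p)" if "q \<in> op_graph B" for q
    using monotone_opD[OF B, of "snd p" "fst p" "snd q" "fst q"] p that
      inner_diff_eq_fitzpatrick_term[of p q]
    by (auto simp: op_graph_def)
  show dom: "p \<in> fitzpatrick_dom B" by (rule fitzpatrick_domI[OF le])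
  have "fitzpatrick_term p p \<le> fitzpatrick B p" by (rule fitzpatrick_term_le[OF dom p])
  moreover have "fitzpatrick B p \<le> inner (fst p) (snd p)"
    using p by (intro fitzpatrick_least le) auto
  ultimately show "fitzpatrick B p = inner (fst p) (snd p)"
    using inner_diff_eq_fitzpatrick_term[of p p] by simp
qed

lemma fitzpatrick_convex:
  assumes ne: "op_graph B \<noteq> {}" and a: "a \<in> fitzpatrick_dom B" and c: "c \<in> fitzpatrick_dom B"
    and s: "0 \<le> s" "s \<le> 1"
  shows "a + s *\<^sub>R (c - a) \<in> fitzpatrick_dom B"
    and "fitzpatrick B (a + s *\<^sub>R (c - a)) \<le> fitzpatrick B a + s * (fitzpatrick B c - fitzpatrick B a)"
proof -
  have le: "fitzpatrick_term (a + s *\<^sub>R (c - a)) p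
      \<le> fitzpatrick B a + s * (fitzpatrick B c - fitzpatrick B a)" if p: "p \<in> op_graph B" for p
  proof -
    have "fitzpatrick_term (a + s *\<^sub>R (c - a)) p
        = (1 - s) * fitzpatrick_term a p + s * fitzpatrick_term c p"
      by (simp add: fitzpatrick_term_def algebra_simps)
    also have "\<dots> \<le> (1 - s) * fitzpatrick B a + s * fitzpatrick B c"
      using s fitzpatrick_term_le[OF a p] fitzpatrick_term_le[OF c p]
      by (intro add_mono mult_left_mono) auto
    finally show ?thesis by (simp add: algebra_simps)
  qed
  show "a + s *\<^sub>R (c - a) \<in> fitzpatrick_dom B" by (rule fitzpatrick_domI[OF le])
  show "fitzpatrick B (a + s *\<^sub>R (c - a)) \<le> fitzpatrick B a + s * (fitzpatrick B c - fitzpatrick B a)"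
    by (rule fitzpatrick_least[OF ne le])
qed

lemma Cauchy_if_midpoint_bound:
  fixes h :: "'a::real_normed_vector \<Rightarrow> real"
  assumes mid: "\<And>a c. a \<in> D \<Longrightarrow> c \<in> D \<Longrightarrow> m \<le> (h a + h c) / 2 - norm (c - a) ^ 2 / 8"
    and W: "\<And>n. W n \<in> D" and small: "\<And>n. h (W n) < m + 1 / Suc n"
  shows "Cauchy W"
proof (rule CauchyI)
  fix e :: real assume e: "0 < e"
  obtain N :: nat where N: "8 / e^2 < Suc N"
    using reals_Archimedean2 by (metis less_Suc_eq of_nat_less_iff order.strict_trans)
  show "\<exists>M. \<forall>i\<ge>M. \<forall>j\<ge>M. norm (W i - W j) < e"
  proof (intro exI allI impI)
    fix i j assume ij: "N \<le> i" "N \<le> j"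
    define c where "c = 1 / real (Suc N)"
    have "h (W k) < m + c" if "N \<le> k" for k
    proof -
      have "1 / real (Suc k) \<le> c" unfolding c_def using that by (intro divide_left_mono) auto
      with small[of k] show ?thesis by linarith
    qed
    then have "h (W i) < m + c" "h (W j) < m + c" using ij by auto
    with mid[OF W W, of i j] have "norm (W j - W i) ^ 2 < 8 * c"
      by (simp add: field_simps)
    also have "\<dots> < e ^ 2"
      using N e by (simp add: c_def field_simps)
    finally show "norm (W i - W j) < e"
      using e by (simp add: norm_minus_commute power_less_imp_less_base)
  qed
qed

lemma fitzpatrick_energy_midpoint:
  assumes ne: "op_graph B \<noteq> {}" and a: "a \<in> fitzpatrick_dom B" and c: "c \<in> fitzpatrick_dom B"
  shows "midpoint a c \<in> fitzpatrick_dom B"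
    and "fitzpatrick B (midpoint a c) + norm (midpoint a c) ^ 2 / 2
      \<le> (fitzpatrick B a + norm a ^ 2 / 2 + (fitzpatrick B c + norm c ^ 2 / 2)) / 2
         - norm (c - a) ^ 2 / 8"
proof -
  have mid: "midpoint a c = a + (1/2) *\<^sub>R (c - a)"
    by (simp add: midpoint_def algebra_simps flip: scaleR_add_left)
  show "midpoint a c \<in> fitzpatrick_dom B"
    unfolding mid by (rule fitzpatrick_convex(1)[OF ne a c]) auto
  have "norm (midpoint a c) ^ 2 = (norm a ^ 2 + norm c ^ 2) / 2 - norm (c - a) ^ 2 / 4"
    by (simp add: midpoint_def power2_norm_eq_inner inner_add_left inner_add_right
        inner_diff_left inner_diff_right inner_commute[of c a] field_simps)
  moreover have "fitzpatrick B (midpoint a c)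
      \<le> fitzpatrick B a + 1/2 * (fitzpatrick B c - fitzpatrick B a)"
    unfolding mid by (rule fitzpatrick_convex(2)[OF ne a c]) auto
  ultimately show "fitzpatrick B (midpoint a c) + norm (midpoint a c) ^ 2 / 2
      \<le> (fitzpatrick B a + norm a ^ 2 / 2 + (fitzpatrick B c + norm c ^ 2 / 2)) / 2
         - norm (c - a) ^ 2 / 8"
    by (simp add: field_simps)
qed

lemma inner_fst_snd_add_norm_square:
  fixes w :: "'a::real_inner \<times> 'a"
  shows "inner (fst w) (snd w) + norm w ^ 2 / 2 = norm (fst w + snd w) ^ 2 / 2"
  unfolding power2_norm_eq_inner inner_prod_def by (simp add: inner_commute algebra_simps)

lemma fitzpatrick_energy_nonneg:
  assumes "maximal_monotone B" and "w \<in> fitzpatrick_dom B"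
  shows "0 \<le> fitzpatrick B w + norm w ^ 2 / 2"
  using inner_fst_snd_add_norm_square[of w] fitzpatrick_ge_pairing[OF assms]
    zero_le_power2[of "norm (fst w + snd w)"]
  by linarith

lemma fitzpatrick_energy_limit:
  assumes ne: "op_graph B \<noteq> {}" and W: "\<And>n. W n \<in> fitzpatrick_dom B" and lim: "W \<longlonglongrightarrow> w"
    and small: "\<And>n. fitzpatrick B (W n) + norm (W n) ^ 2 / 2 < m + 1 / Suc n"
  shows "w \<in> fitzpatrick_dom B" and "fitzpatrick B w + norm w ^ 2 / 2 \<le> m"
proof -
  have term_le: "fitzpatrick_term w p \<le> m - norm w ^ 2 / 2" if p: "p \<in> op_graph B" for p
  proof (rule LIMSEQ_le)
    show "(\<lambda>n. fitzpatrick_term (W n) p) \<longlonglongrightarrow> fitzpatrick_term w p"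
      unfolding fitzpatrick_term_def by (intro tendsto_intros lim)
    have "(\<lambda>n. m + 1 / Suc n) \<longlonglongrightarrow> m + 0"
      by (rule tendsto_add[OF tendsto_const LIMSEQ_inverse_real_of_nat[unfolded inverse_eq_divide]])
    moreover have "(\<lambda>n. norm (W n) ^ 2 / 2) \<longlonglongrightarrow> norm w ^ 2 / 2"
      by (intro tendsto_divide tendsto_power tendsto_norm tendsto_const lim) simp
    ultimately have "(\<lambda>n. m + 1 / Suc n - norm (W n) ^ 2 / 2) \<longlonglongrightarrow> m + 0 - norm w ^ 2 / 2"
      by (rule tendsto_diff)
    then show "(\<lambda>n. m + 1 / Suc n - norm (W n) ^ 2 / 2) \<longlonglongrightarrow> m - norm w ^ 2 / 2"
      by simp
    have "fitzpatrick_term (W n) p \<le> m + 1 / Suc n - norm (W n) ^ 2 / 2" for n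
      using fitzpatrick_term_le[OF W p, of n] small[of n] by linarith
    then show "\<exists>N. \<forall>n\<ge>N. fitzpatrick_term (W n) p \<le> m + 1 / Suc n - norm (W n) ^ 2 / 2"
      by blast
  qed
  show "w \<in> fitzpatrick_dom B" by (rule fitzpatrick_domI[OF term_le])
  show "fitzpatrick B w + norm w ^ 2 / 2 \<le> m"
    using fitzpatrick_least[OF ne term_le] by simp
qed

lemma fitzpatrick_energy_has_minimizer:
  fixes B :: "'a::{real_inner, complete_space} \<Rightarrow> 'a set"
  assumes B: "maximal_monotone B"
  obtains w where "w \<in> fitzpatrick_dom B"
    and "\<And>w'. w' \<in> fitzpatrick_dom B \<Longrightarrow>
      fitzpatrick B w + norm w ^ 2 / 2 \<le> fitzpatrick B w' + norm w' ^ 2 / 2"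
proof -
  let ?D = "fitzpatrick_dom B"
  define h where "h w = fitzpatrick B w + norm w ^ 2 / 2" for w
  have ne: "op_graph B \<noteq> {}"
    using maximal_monotone_nonempty[OF B] by (auto simp: op_graph_def)
  then have D_ne: "?D \<noteq> {}"
    using fitzpatrick_on_graph(1)[OF maximal_monotone_imp_monotone_op[OF B]] by blast
  define m where "m = Inf (h ` ?D)"
  have bdd: "bdd_below (h ` ?D)"
    by (rule bdd_belowI2[of _ 0]) (simp add: h_def fitzpatrick_energy_nonneg[OF B])
  have m_le: "m \<le> h w" if "w \<in> ?D" for w
    unfolding m_def by (rule cINF_lower[OF bdd that])
  have "\<exists>w. w \<in> ?D \<and> h w < m + 1 / Suc n" for n
  proof -
    have "Inf (h ` ?D) < m + 1 / Suc n" by (simp add: m_def)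
    then obtain y where "y \<in> h ` ?D" "y < m + 1 / Suc n"
      using cInf_lessD[of "h ` ?D"] D_ne by blast
    then show ?thesis by blast
  qed
  then have "\<forall>n. \<exists>w. w \<in> ?D \<and> h w < m + 1 / Suc n" by blast
  from choice[OF this] obtain W where "\<forall>n. W n \<in> ?D \<and> h (W n) < m + 1 / Suc n"
    by blast
  then have W: "\<And>n. W n \<in> ?D" and small: "\<And>n. h (W n) < m + 1 / Suc n"
    by auto
  have "Cauchy W"
  proof (rule Cauchy_if_midpoint_bound[OF _ W small])
    fix a c assume a: "a \<in> ?D" and c: "c \<in> ?D"
    have "m \<le> h (midpoint a c)"
      by (rule m_le[OF fitzpatrick_energy_midpoint(1)[OF ne a c]])
    also have "\<dots> \<le> (h a + h c) / 2 - norm (c - a) ^ 2 / 8"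
      unfolding h_def by (rule fitzpatrick_energy_midpoint(2)[OF ne a c])
    finally show "m \<le> (h a + h c) / 2 - norm (c - a) ^ 2 / 8" .
  qed
  then obtain w where "W \<longlonglongrightarrow> w"
    using Cauchy_convergent convergent_def by blast
  note limit = fitzpatrick_energy_limit[OF ne W this small[unfolded h_def]]
  with m_le show ?thesis
    unfolding h_def by (meson order_trans that)
qed

lemma nonneg_if_small_perturbations_nonneg:
  fixes q c :: real
  assumes "\<And>s. 0 < s \<Longrightarrow> s < 1 \<Longrightarrow> 0 \<le> q + s * c"
  shows "0 \<le> q"
proof (rule tendsto_lowerbound)
  have "((\<lambda>s. q + s * c) \<longlongrightarrow> q + 0 * c) (at_right 0)" by (intro tendsto_intros)
  then show "((\<lambda>s. q + s * c) \<longlongrightarrow> q) (at_right 0)" by simp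
  show "\<forall>\<^sub>F s in at_right 0. 0 \<le> q + s * c"
    by (rule eventually_at_rightI[of 0 1]) (auto intro: assms)
qed simp

lemma norm_add_scaleR_square:
  fixes w d :: "'a::real_inner"
  shows "norm (w + s *\<^sub>R d) ^ 2 = norm w ^ 2 + 2 * s * inner w d + s^2 * norm d ^ 2"
  unfolding power2_norm_eq_inner
  by (simp add: inner_add_left inner_add_right inner_commute[of d w] power2_eq_square algebra_simps)

lemma fitzpatrick_minimizer_inequality:
  assumes B: "maximal_monotone B" and w: "w \<in> fitzpatrick_dom B"
    and min: "\<And>w'. w' \<in> fitzpatrick_dom B \<Longrightarrow>
      fitzpatrick B w + norm w ^ 2 / 2 \<le> fitzpatrick B w' + norm w' ^ 2 / 2"
    and p: "p \<in> op_graph B"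
  shows "norm (fst w + snd w) ^ 2 \<le> inner (- snd w - fst p) (- fst w - snd p)"
proof -
  let ?F = "fitzpatrick B" and ?d = "p - w"
  have ne: "op_graph B \<noteq> {}" using p by blast
  have p_dom: "p \<in> fitzpatrick_dom B" and Fp: "?F p = inner (fst p) (snd p)"
    using fitzpatrick_on_graph[OF maximal_monotone_imp_monotone_op[OF B] p] by auto
  have "0 \<le> (inner (fst p) (snd p) - ?F w + inner w ?d) + s * (norm ?d ^ 2 / 2)"
    if s: "0 < s" "s < 1" for s
  proof -
    have "?F w + norm w ^ 2 / 2 \<le> ?F (w + s *\<^sub>R ?d) + norm (w + s *\<^sub>R ?d) ^ 2 / 2"
      using s by (intro min fitzpatrick_convex(1)[OF ne w p_dom]) auto
    moreover have "?F (w + s *\<^sub>R ?d) \<le> ?F w + s * (inner (fst p) (snd p) - ?F w)"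
      using s fitzpatrick_convex(2)[OF ne w p_dom, of s] by (simp add: Fp)
    moreover note norm_add_scaleR_square[of w s ?d]
    ultimately have "0 \<le> s * ((inner (fst p) (snd p) - ?F w + inner w ?d) + s * (norm ?d ^ 2 / 2))"
      by (simp add: power2_eq_square algebra_simps)
    with s show ?thesis by (simp add: zero_le_mult_iff)
  qed
  then have "0 \<le> inner (fst p) (snd p) - ?F w + inner w ?d"
    by (rule nonneg_if_small_perturbations_nonneg)
  moreover have "inner (fst w) (snd w) \<le> ?F w" by (rule fitzpatrick_ge_pairing[OF B w])
  moreover have "inner (- snd w - fst p) (- fst w - snd p) - norm (fst w + snd w) ^ 2
      = inner (fst p) (snd p) - inner (fst w) (snd w) + inner w ?d"
    unfolding power2_norm_eq_inner inner_prod_def by (simp add: inner_commute algebra_simps)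
  ultimately show ?thesis by linarith
qed

lemma maximal_monotone_has_antifixpoint:
  fixes B :: "'a::{real_inner, complete_space} \<Rightarrow> 'a set"
  assumes B: "maximal_monotone B"
  shows "\<exists>z. - z \<in> B z"
proof -
  obtain w where w: "w \<in> fitzpatrick_dom B"
    and min: "\<And>w'. w' \<in> fitzpatrick_dom B \<Longrightarrow>
      fitzpatrick B w + norm w ^ 2 / 2 \<le> fitzpatrick B w' + norm w' ^ 2 / 2"
    using fitzpatrick_energy_has_minimizer[OF B] by blast
  define x u where "x = fst w" and "u = snd w"
  note ineq = fitzpatrick_minimizer_inequality[OF B w min, folded x_def u_def]
  have "- x \<in> B (- u)"
  proof (rule maximal_monotoneD[OF B])
    fix y v assume "v \<in> B y"
    then have "norm (x + u) ^ 2 \<le> inner (- u - y) (- x - v)"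
      using ineq[of "(y, v)"] by (simp add: op_graph_def)
    then show "0 \<le> inner (- u - y) (- x - v)"
      using zero_le_power2[of "norm (x + u)"] by linarith
  qed
  then have "norm (x + u) ^ 2 \<le> 0"
    using ineq[of "(- u, - x)"] by (simp add: op_graph_def)
  then have "u = - x"
    by (simp add: eq_neg_iff_add_eq_0 add.commute)
  with \<open>- x \<in> B (- u)\<close> show ?thesis by auto
qed

lemma maximal_monotone_shift:
  assumes A: "maximal_monotone A"
  shows "maximal_monotone (\<lambda>z. A (x + z))"
  unfolding maximal_monotone_def monotone_op_def
proof (intro conjI allI impI)
  fix z1 z2 u v assume "u \<in> A (x + z1)" "v \<in> A (x + z2)"
  from monotone_opD[OF maximal_monotone_imp_monotone_op[OF A] this]
  show "0 \<le> inner (z1 - z2) (u - v)" by simp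
next
  fix z u assume H: "\<forall>y v. v \<in> A (x + y) \<longrightarrow> 0 \<le> inner (z - y) (u - v)"
  show "u \<in> A (x + z)"
  proof (rule maximal_monotoneD[OF A])
    fix y v assume "v \<in> A y"
    with H[THEN spec[of _ "y - x"], THEN spec[of _ v]] show "0 \<le> inner (x + z - y) (u - v)"
      by (simp add: algebra_simps)
  qed
qed

lemma maximal_monotone_scaleR:
  assumes A: "maximal_monotone A" and c: "0 < c"
  shows "maximal_monotone (\<lambda>y. (\<lambda>a. c *\<^sub>R a) ` A y)"
  unfolding maximal_monotone_def monotone_op_def
proof (intro conjI allI impI)
  fix x y u v assume "u \<in> (\<lambda>a. c *\<^sub>R a) ` A x" "v \<in> (\<lambda>a. c *\<^sub>R a) ` A y"
  then obtain a b where "a \<in> A x" "b \<in> A y" "u = c *\<^sub>R a" "v = c *\<^sub>R b" by blast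
  with monotone_opD[OF maximal_monotone_imp_monotone_op[OF A]] c
  show "0 \<le> inner (x - y) (u - v)"
    by (simp add: scaleR_diff_right[symmetric])
next
  fix x u assume H: "\<forall>y v. v \<in> (\<lambda>a. c *\<^sub>R a) ` A y \<longrightarrow> 0 \<le> inner (x - y) (u - v)"
  have "(1 / c) *\<^sub>R u \<in> A x"
  proof (rule maximal_monotoneD[OF A])
    fix y b assume "b \<in> A y"
    then have "0 \<le> inner (x - y) (u - c *\<^sub>R b)"
      using H[rule_format, OF imageI[of b "A y" "\<lambda>a. c *\<^sub>R a"]] by simp
    also have "u - c *\<^sub>R b = c *\<^sub>R ((1 / c) *\<^sub>R u - b)"
      using c by (simp add: algebra_simps)
    finally show "0 \<le> inner (x - y) ((1 / c) *\<^sub>R u - b)"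
      using c by (simp add: zero_le_mult_iff)
  qed
  then have "c *\<^sub>R ((1 / c) *\<^sub>R u) \<in> (\<lambda>a. c *\<^sub>R a) ` A x" by (rule imageI)
  with c show "u \<in> (\<lambda>a. c *\<^sub>R a) ` A x" by simp
qed

theorem minty_surjectivity:
  fixes A :: "'a::{real_inner, complete_space} \<Rightarrow> 'a set"
  assumes "maximal_monotone A"
  shows "\<exists>y. x - y \<in> A y"
proof -
  obtain z where "- z \<in> A (x + z)"
    using maximal_monotone_has_antifixpoint[OF maximal_monotone_shift[OF assms]] by blast
  then show ?thesis by (intro exI[of _ "x + z"]) simp
qed

section \<open>Resolvents\<close>

lemma norm_le_if_inner_scaled_nonneg:
  fixes a b :: "'a::real_inner"
  assumes lam: "0 < lam" and le: "lam \<le> mu" and inner: "0 \<le> inner (b - a) (mu *\<^sub>R a - lam *\<^sub>R b)"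
  shows "norm a \<le> norm b"
proof (rule ccontr)
  assume "\<not> norm a \<le> norm b"
  then have gt: "norm b < norm a" by simp
  have "inner (b - a) (mu *\<^sub>R a - lam *\<^sub>R b) = (lam + mu) * inner a b - lam * norm b ^ 2 - mu * norm a ^ 2"
    by (simp add: power2_norm_eq_inner inner_diff_left inner_diff_right inner_commute[of b a]
        algebra_simps)
  also have "\<dots> \<le> (lam + mu) * (norm a * norm b) - lam * norm b ^ 2 - mu * norm a ^ 2"
    using lam le by (simp add: mult_left_mono norm_cauchy_schwarz)
  also have "\<dots> = - ((norm a - norm b) * (mu * norm a - lam * norm b))"
    by (simp add: power2_eq_square algebra_simps)
  also have "\<dots> < 0"
  proof -
    have "lam * norm b \<le> mu * norm b" using le by (simp add: mult_right_mono)
    also have "\<dots> < mu * norm a" using gt lam le by simp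
    finally show ?thesis using gt by simp
  qed
  finally show False using inner by simp
qed

lemma norm_diff_le_if_inner_scaled_nonneg:
  fixes a b :: "'a::real_inner"
  assumes mu: "0 < mu" and inner: "0 \<le> inner (b - a) (mu *\<^sub>R a - lam *\<^sub>R b)"
  shows "norm (b - a) \<le> \<bar>mu - lam\<bar> / mu * norm b"
proof -
  have "inner (b - a) (mu *\<^sub>R a - lam *\<^sub>R b) = (mu - lam) * inner (b - a) b - mu * norm (b - a) ^ 2"
    by (simp add: power2_norm_eq_inner inner_diff_left inner_diff_right algebra_simps)
  also have "\<dots> \<le> \<bar>mu - lam\<bar> * (norm (b - a) * norm b) - mu * norm (b - a) ^ 2"
  proof -
    have "(mu - lam) * inner (b - a) b \<le> \<bar>mu - lam\<bar> * \<bar>inner (b - a) b\<bar>"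
      by (metis abs_ge_self abs_mult)
    also have "\<dots> \<le> \<bar>mu - lam\<bar> * (norm (b - a) * norm b)"
      by (intro mult_left_mono Cauchy_Schwarz_ineq2) simp
    finally show ?thesis by simp
  qed
  finally have "mu * norm (b - a) * norm (b - a) \<le> (\<bar>mu - lam\<bar> * norm b) * norm (b - a)"
    using inner by (simp add: power2_eq_square algebra_simps)
  then have "mu * norm (b - a) \<le> \<bar>mu - lam\<bar> * norm b"
    by (cases "b = a") (simp_all add: mult_le_cancel_right)
  with mu show ?thesis by (simp add: field_simps)
qed

lemma norm_le_norm_add_if_inner_nonneg:
  fixes a b :: "'a::real_inner"
  assumes "0 \<le> inner a b"
  shows "norm a \<le> norm (a + b)"
proof -
  have "norm (a + b) ^ 2 = norm a ^ 2 + 2 * inner a b + norm b ^ 2"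
    using norm_add_scaleR_square[of a 1 b] by simp
  with assms have "norm a ^ 2 \<le> norm (a + b) ^ 2"
    using zero_le_power2[of "norm b"] by linarith
  then show ?thesis by (rule power2_le_imp_le) simp
qed

context
  fixes A :: "'a::{real_inner, complete_space} \<Rightarrow> 'a set"
  assumes A: "maximal_monotone A"
begin

lemma resolvent_exists:
  assumes "0 < lam"
  shows "\<exists>y. (1 / lam) *\<^sub>R (x - y) \<in> A y"
proof -
  obtain y where "x - y \<in> (\<lambda>a. lam *\<^sub>R a) ` A y"
    using minty_surjectivity[OF maximal_monotone_scaleR[OF A assms]] by blast
  then obtain a where "a \<in> A y" and "x - y = lam *\<^sub>R a" by blast
  with assms show ?thesis by (intro exI[of _ y]) simp
qed

lemma resolvent_unique:
  assumes lam: "0 < lam"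
    and "(1 / lam) *\<^sub>R (x - y1) \<in> A y1" and "(1 / lam) *\<^sub>R (x - y2) \<in> A y2"
  shows "y1 = y2"
proof -
  have "0 \<le> inner (y1 - y2) ((1 / lam) *\<^sub>R (x - y1) - (1 / lam) *\<^sub>R (x - y2))"
    by (rule monotone_opD[OF maximal_monotone_imp_monotone_op[OF A] assms(2,3)])
  also have "(1 / lam) *\<^sub>R (x - y1) - (1 / lam) *\<^sub>R (x - y2) = - ((1 / lam) *\<^sub>R (y1 - y2))"
    by (simp add: algebra_simps)
  finally have "0 \<le> - (inner (y1 - y2) (y1 - y2) / lam)"
    by simp
  then have "inner (y1 - y2) (y1 - y2) \<le> 0"
    using lam by (simp add: divide_le_0_iff)
  then have "inner (y1 - y2) (y1 - y2) = 0"
    using inner_ge_zero[of "y1 - y2"] by linarith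
  then show ?thesis by simp
qed

lemma resolvent_in:
  assumes "0 < lam"
  shows "(1 / lam) *\<^sub>R (x - resolvent A lam x) \<in> A (resolvent A lam x)"
proof -
  obtain y where y: "(1 / lam) *\<^sub>R (x - y) \<in> A y" using resolvent_exists[OF assms] by blast
  have "resolvent A lam x = y"
    unfolding resolvent_def
  proof (rule the_equality)
    fix y' assume "(1 / lam) *\<^sub>R (x - y') \<in> A y'"
    then show "y' = y" by (rule resolvent_unique[OF assms _ y])
  qed (rule y)
  with y show ?thesis by simp
qed

lemma resolvent_eqI:
  assumes "0 < lam" and "(1 / lam) *\<^sub>R (x - y) \<in> A y"
  shows "resolvent A lam x = y"
  by (rule resolvent_unique[OF assms(1) resolvent_in[OF assms(1)] assms(2)])

lemma resolvent_eq_self_iff: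
  assumes "0 < lam"
  shows "resolvent A lam x = x \<longleftrightarrow> 0 \<in> A x"
proof
  assume "resolvent A lam x = x"
  then show "0 \<in> A x" using resolvent_in[OF assms, of x] by simp
next
  assume "0 \<in> A x"
  then show "resolvent A lam x = x" by (intro resolvent_eqI[OF assms]) simp
qed

lemma resolvent_zero_in_range:
  assumes "0 < lam" and "0 \<in> A z"
  shows "resolvent A lam z = z"
  using resolvent_eq_self_iff[OF assms(1)] assms(2) by simp

lemma resolvent_two_params:
  assumes lam: "0 < lam" and mu: "0 < mu"
  shows "0 \<le> inner (resolvent A lam x - resolvent A mu y)
                 (mu *\<^sub>R (x - resolvent A lam x) - lam *\<^sub>R (y - resolvent A mu y))"
proof -
  let ?a = "resolvent A lam x" and ?b = "resolvent A mu y"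
  have "0 \<le> inner (?a - ?b) ((1 / lam) *\<^sub>R (x - ?a) - (1 / mu) *\<^sub>R (y - ?b))"
    by (rule monotone_opD[OF maximal_monotone_imp_monotone_op[OF A]
          resolvent_in[OF lam] resolvent_in[OF mu]])
  also have "(1 / lam) *\<^sub>R (x - ?a) - (1 / mu) *\<^sub>R (y - ?b)
      = (1 / (lam * mu)) *\<^sub>R (mu *\<^sub>R (x - ?a) - lam *\<^sub>R (y - ?b))"
    using lam mu by (simp add: algebra_simps)
  finally show ?thesis
    using mult_pos_pos[OF lam mu] by (simp add: zero_le_divide_iff)
qed

lemma residual_mono_param:
  assumes "0 < lam" and "lam \<le> mu"
  shows "norm (x - resolvent A lam x) \<le> norm (x - resolvent A mu x)"
  using resolvent_two_params[of lam mu x x] assms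
  by (intro norm_le_if_inner_scaled_nonneg[OF assms]) simp

lemma resolvent_lipschitz_param:
  assumes lam: "0 < lam" and mu: "0 < mu"
  shows "norm (resolvent A lam x - resolvent A mu x) \<le> \<bar>mu - lam\<bar> / mu * norm (x - resolvent A mu x)"
  using norm_diff_le_if_inner_scaled_nonneg[OF mu, where a = "x - resolvent A lam x"
      and b = "x - resolvent A mu x" and lam = lam] resolvent_two_params[OF lam mu, of x x]
  by simp

lemma resolvent_firmly_nonexpansive:
  assumes "0 < lam"
  shows "0 \<le> inner (resolvent A lam x - resolvent A lam y)
                 ((x - resolvent A lam x) - (y - resolvent A lam y))"
  using resolvent_two_params[OF assms assms, of x y] assms
  by (simp add: scaleR_diff_right[symmetric] zero_le_mult_iff)

lemma resolvent_nonexpansive: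
  assumes "0 < lam"
  shows "norm (resolvent A lam x - resolvent A lam y) \<le> norm (x - y)"
  using norm_le_norm_add_if_inner_nonneg[OF resolvent_firmly_nonexpansive[OF assms, of x y]]
  by simp

lemma residual_nonexpansive:
  assumes "0 < lam"
  shows "norm ((x - resolvent A lam x) - (y - resolvent A lam y)) \<le> norm (x - y)"
  using norm_le_norm_add_if_inner_nonneg[OF resolvent_firmly_nonexpansive[OF assms, of x y,
        unfolded inner_commute[of "resolvent A lam x - resolvent A lam y"]]]
  by simp

lemma residual_le_dist_zero:
  assumes "0 < lam" and "0 \<in> A z"
  shows "norm (x - resolvent A lam x) \<le> norm (x - z)"
  using residual_nonexpansive[OF assms(1), of x z] resolvent_zero_in_range[OF assms] by simp

lemma inner_resolvent_step_nonpos: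
  assumes "0 < lam" and "0 \<in> A z"
  shows "inner (x - z) (resolvent A lam x - x) \<le> 0"
proof -
  let ?J = "resolvent A lam x"
  have "0 \<le> inner (?J - z) (x - ?J)"
    using resolvent_firmly_nonexpansive[OF assms(1), of x z] resolvent_zero_in_range[OF assms]
    by simp
  moreover have "inner (x - z) (?J - x) = - inner (?J - z) (x - ?J) - inner (x - ?J) (x - ?J)"
    by (simp add: inner_diff_left inner_diff_right inner_commute)
  ultimately show ?thesis
    using inner_ge_zero[of "x - ?J"] by linarith
qed

end

section \<open>Differential inequalities\<close>

lemma has_field_derivative_inner_diff_self:
  fixes x :: "real \<Rightarrow> 'a::real_inner"
  assumes "(x has_vector_derivative v) (at t within S)"
  shows "((\<lambda>s. inner (x s - c) (x s - c)) has_field_derivative 2 * inner (x t - c) v) (at t within S)"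
proof -
  have d: "((\<lambda>s. x s - c) has_derivative (\<lambda>h. h *\<^sub>R v)) (at t within S)"
    using assms unfolding has_vector_derivative_def by (auto intro!: derivative_eq_intros)
  have "((\<lambda>s. inner (x s - c) (x s - c)) has_derivative
          (\<lambda>h. inner (x t - c) (h *\<^sub>R v) + inner (h *\<^sub>R v) (x t - c))) (at t within S)"
    by (rule has_derivative_inner[OF d d])
  moreover have "(\<lambda>h. inner (x t - c) (h *\<^sub>R v) + inner (h *\<^sub>R v) (x t - c))
      = (*) (2 * inner (x t - c) v)"
    by (simp add: fun_eq_iff inner_commute[of v] algebra_simps)
  ultimately show ?thesis by (simp add: has_field_derivative_def)
qed

lemma le_if_derivative_nonpos:
  fixes f :: "real \<Rightarrow> real"
  assumes "a \<le> b"
    and "\<And>t. t \<in> {a..b} \<Longrightarrow> (f has_field_derivative f' t) (at t within {a..b})"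
    and "\<And>t. t \<in> {a..b} \<Longrightarrow> f' t \<le> 0"
  shows "f b \<le> f a"
proof -
  obtain t where t: "t \<in> {a..b}" and eq: "f b - f a = f' t * (b - a)"
    using mvt_very_simple[OF assms(1), of f "\<lambda>t. (*) (f' t)"] assms(2)
    unfolding has_field_derivative_def by auto
  have "f' t * (b - a) \<le> 0" using assms(3)[OF t] assms(1) by (simp add: mult_nonpos_nonneg)
  with eq show ?thesis by simp
qed

lemma gronwall_differential:
  fixes f :: "real \<Rightarrow> real"
  assumes t: "0 \<le> t"
    and f: "\<And>s. s \<in> {0..t} \<Longrightarrow> (f has_field_derivative f' s) (at s within {0..t})"
    and le: "\<And>s. s \<in> {0..t} \<Longrightarrow> f' s \<le> K * f s"
  shows "f t \<le> exp (K * t) * f 0"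
proof -
  define g where "g s = exp (- (K * s)) * f s" for s
  have "g t \<le> g 0"
  proof (rule le_if_derivative_nonpos[OF t])
    fix s assume s: "s \<in> {0..t}"
    show "(g has_field_derivative exp (- (K * s)) * (f' s - K * f s)) (at s within {0..t})"
      unfolding g_def by (auto intro!: derivative_eq_intros f[OF s] simp: algebra_simps)
    show "exp (- (K * s)) * (f' s - K * f s) \<le> 0"
      using le[OF s] by (simp add: mult_nonneg_nonpos)
  qed
  then have "exp (- (K * t)) * f t \<le> f 0" by (simp add: g_def)
  then show ?thesis by (simp add: exp_minus field_simps)
qed

lemma lipschitz_ode_unique:
  fixes G :: "'a::real_inner \<Rightarrow> 'a"
  assumes G: "L-lipschitz_on UNIV G"
    and x: "\<And>s. s \<in> {0..T} \<Longrightarrow> (x has_vector_derivative G (x s)) (at s within {0..})"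
    and y: "\<And>s. s \<in> {0..T} \<Longrightarrow> (y has_vector_derivative G (y s)) (at s within {0..})"
    and "x 0 = y 0" and t: "t \<in> {0..T}"
  shows "x t = y t"
proof -
  define e where "e s = inner (x s - y s - 0) (x s - y s - 0)" for s
  have "e t \<le> exp (2 * L * t) * e 0"
  proof (rule gronwall_differential)
    fix s assume s: "s \<in> {0..t}"
    then have "s \<in> {0..T}" using t by auto
    have "((\<lambda>s. x s - y s) has_vector_derivative G (x s) - G (y s)) (at s within {0..t})"
      using x[OF \<open>s \<in> {0..T}\<close>] y[OF \<open>s \<in> {0..T}\<close>]
      by (intro has_vector_derivative_diff) (auto intro: has_vector_derivative_within_subset)
    then show "(e has_field_derivative 2 * inner (x s - y s - 0) (G (x s) - G (y s)))
        (at s within {0..t})"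
      unfolding e_def by (rule has_field_derivative_inner_diff_self)
    have "inner (x s - y s) (G (x s) - G (y s)) \<le> norm (x s - y s) * norm (G (x s) - G (y s))"
      by (rule norm_cauchy_schwarz)
    also have "\<dots> \<le> norm (x s - y s) * (L * norm (x s - y s))"
      using lipschitz_onD[OF G] by (intro mult_left_mono) (auto simp: dist_norm)
    also have "\<dots> = L * e s"
      by (simp add: e_def power2_eq_square flip: power2_norm_eq_inner)
    finally show "2 * inner (x s - y s - 0) (G (x s) - G (y s)) \<le> 2 * L * e s"
      by simp
  qed (use t in simp)
  with \<open>x 0 = y 0\<close> have "inner (x t - y t) (x t - y t) \<le> 0" by (simp add: e_def)
  then show ?thesis by (metis inner_gt_zero_iff not_le eq_iff_diff_eq_0)
qed

lemma continuous_on_if_dist_le: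
  fixes x :: "'a::metric_space \<Rightarrow> 'b::metric_space" and g :: "'a \<Rightarrow> 'c::metric_space"
  assumes "continuous_on S x" and "\<And>s t. s \<in> S \<Longrightarrow> t \<in> S \<Longrightarrow> dist (g s) (g t) \<le> dist (x s) (x t)"
  shows "continuous_on S g"
  unfolding continuous_on_iff
proof (intro ballI allI impI)
  fix s and e :: real assume "s \<in> S" "0 < e"
  then obtain d where "0 < d" and d: "\<forall>t\<in>S. dist t s < d \<longrightarrow> dist (x t) (x s) < e"
    using assms(1) unfolding continuous_on_iff by blast
  have "dist (g t) (g s) < e" if "t \<in> S" "dist t s < d" for t
    using d that assms(2)[OF that(1) \<open>s \<in> S\<close>] by (blast intro: le_less_trans)
  with \<open>0 < d\<close> show "\<exists>d>0. \<forall>t\<in>S. dist t s < d \<longrightarrow> dist (g t) (g s) < e" by blast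
qed

lemma norm_increment_le:
  fixes x :: "real \<Rightarrow> 'a::real_normed_vector"
  assumes "(x has_vector_derivative v) (at t within {0..})" and "0 \<le> t" and "0 < e"
  shows "\<exists>d>0. \<forall>h. 0 < h \<longrightarrow> h < d \<longrightarrow> norm (x (t + h) - x t) \<le> h * (norm v + e)"
proof -
  obtain d where "d > 0" and d: "\<And>y. y \<in> {0..} \<Longrightarrow> norm (y - t) < d \<Longrightarrow>
      norm (x y - x t - (y - t) *\<^sub>R v) \<le> e * norm (y - t)"
    using assms unfolding has_vector_derivative_def has_derivative_within_alt by blast
  have "norm (x (t + h) - x t) \<le> h * (norm v + e)" if h: "0 < h" "h < d" for h
  proof -
    have "norm (x (t + h) - x t)
        \<le> norm (x (t + h) - x t - h *\<^sub>R v) + norm (h *\<^sub>R v)"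
      using norm_triangle_ineq[of "x (t + h) - x t - h *\<^sub>R v" "h *\<^sub>R v"] by simp
    also have "\<dots> \<le> e * h + h * norm v"
      using d[of "t + h"] h assms(2) by simp
    finally show ?thesis by (simp add: algebra_simps)
  qed
  with \<open>d > 0\<close> show ?thesis by blast
qed

lemma norm_diff_le_of_derivative_bound:
  fixes x :: "real \<Rightarrow> 'a::real_normed_vector"
  assumes "\<And>t. 0 \<le> t \<Longrightarrow> (x has_vector_derivative v t) (at t within {0..})"
    and "\<And>t. 0 \<le> t \<Longrightarrow> norm (v t) \<le> B"
    and "0 \<le> s" and "0 \<le> t"
  shows "norm (x s - x t) \<le> B * norm (s - t)"
proof (rule differentiable_bound[where S="{0..}" and f'="\<lambda>t h. h *\<^sub>R v t"])
  fix u :: real assume "u \<in> {0..}"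
  then show "(x has_derivative (\<lambda>h. h *\<^sub>R v u)) (at u within {0..})"
    using assms(1) by (simp add: has_vector_derivative_def)
  show "onorm (\<lambda>h. h *\<^sub>R v u) \<le> B"
    using assms(2) \<open>u \<in> {0..}\<close> by (simp add: onorm_scaleR_left[OF bounded_linear_ident] onorm_id)
qed (use assms(3,4) in auto)

lemma Inf_sublevel_notin:
  fixes a b :: real and k :: "real \<Rightarrow> real"
  defines "S \<equiv> {t \<in> {a..b}. k t < k a}"
  assumes cont: "continuous_on {a..b} k" and s: "s \<in> S"
  shows "a \<le> Inf S" and "Inf S \<notin> S"
proof -
  have bdd: "bdd_below S" by (rule bdd_belowI[of _ a]) (simp add: S_def)
  show a_le: "a \<le> Inf S" using s by (intro cInf_greatest) (auto simp: S_def)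
  show "Inf S \<notin> S"
  proof
    define c where "c = Inf S"
    assume "Inf S \<in> S"
    then have kc: "k c < k a" and "c \<le> b" by (simp_all add: S_def c_def)
    with a_le have "a < c" by (cases "a = c") (auto simp: c_def)
    have "continuous (at c within {a..b}) k"
      using cont a_le \<open>c \<le> b\<close> by (simp add: c_def continuous_on_eq_continuous_within)
    moreover have "0 < k a - k c" using kc by simp
    ultimately obtain \<delta> where "\<delta> > 0"
      and \<delta>: "\<forall>t\<in>{a..b}. dist t c < \<delta> \<longrightarrow> dist (k t) (k c) < k a - k c"
      unfolding continuous_within_eps_delta by blast
    define t where "t = max a (c - \<delta> / 2)"
    have t: "t \<in> {a..b}" "dist t c < \<delta>" "t < c"
      using \<open>\<delta> > 0\<close> \<open>a < c\<close> \<open>c \<le> b\<close> by (auto simp: t_def dist_real_def)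
    with \<delta> have "dist (k t) (k c) < k a - k c" by blast
    then have "t \<in> S" using t(1) by (simp add: S_def dist_real_def abs_less_iff)
    with cInf_lower[OF _ bdd] \<open>t < c\<close> show False by (fastforce simp: c_def)
  qed
qed

lemma le_if_right_increasing:
  fixes k :: "real \<Rightarrow> real"
  assumes ab: "a \<le> b" and cont: "continuous_on {a..b} k"
    and incr: "\<And>t. a \<le> t \<Longrightarrow> t < b \<Longrightarrow>
      \<exists>d>0. \<forall>h. 0 < h \<longrightarrow> h < d \<longrightarrow> t + h \<le> b \<longrightarrow> k t < k (t + h)"
  shows "k a \<le> k b"
proof (rule ccontr)
  define S where "S = {t \<in> {a..b}. k t < k a}"
  define c where "c = Inf S"
  assume "\<not> k a \<le> k b"
  with ab have b: "b \<in> S" by (simp add: S_def)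
  have c_le: "c \<le> s" if "s \<in> S" for s
    unfolding c_def by (rule cInf_lower[OF that]) (rule bdd_belowI[of _ a], simp add: S_def)
  note c = Inf_sublevel_notin[OF cont b[unfolded S_def], folded S_def c_def]
  have "c \<noteq> b" using b c(2) by blast
  with c_le[OF b] have "c < b" by simp
  with c have kc: "k a \<le> k c" by (simp add: S_def)
  obtain d where "d > 0" and d: "\<forall>h. 0 < h \<longrightarrow> h < d \<longrightarrow> c + h \<le> b \<longrightarrow> k c < k (c + h)"
    using incr[OF c(1) \<open>c < b\<close>] by blast
  have "Inf S < c + d" using \<open>d > 0\<close> by (simp add: c_def)
  then obtain s where s: "s \<in> S" "s < c + d"
    using cInf_lessD[of S] b by blast
  have "c \<noteq> s" using s(1) c(2) by blast
  with c_le[OF s(1)] have "0 < s - c" by simp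
  then have "k c < k (c + (s - c))"
    using d[rule_format, of "s - c"] s by (simp add: S_def)
  with kc s show False by (simp add: S_def)
qed

lemma le_if_right_dini_nonneg:
  fixes f :: "real \<Rightarrow> real"
  assumes ab: "a \<le> b" and cont: "continuous_on {a..b} f"
    and dini: "\<And>t e. a \<le> t \<Longrightarrow> t < b \<Longrightarrow> 0 < e \<Longrightarrow>
      \<exists>d>0. \<forall>h. 0 < h \<longrightarrow> h < d \<longrightarrow> t + h \<le> b \<longrightarrow> f t - e * h \<le> f (t + h)"
  shows "f a \<le> f b"
proof (rule field_le_epsilon)
  fix e :: real assume "0 < e"
  define \<epsilon> where "\<epsilon> = e / (2 * (b - a) + 1)"
  have \<epsilon>: "0 < \<epsilon>" "2 * \<epsilon> * (b - a) \<le> e"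
    using \<open>0 < e\<close> ab by (simp_all add: \<epsilon>_def field_simps)
  have "f a + 2 * \<epsilon> * (a - a) \<le> f b + 2 * \<epsilon> * (b - a)"
  proof (rule le_if_right_increasing[OF ab, where k = "\<lambda>t. f t + 2 * \<epsilon> * (t - a)"])
    show "continuous_on {a..b} (\<lambda>t. f t + 2 * \<epsilon> * (t - a))"
      by (intro continuous_intros cont)
    fix t assume "a \<le> t" "t < b"
    then obtain d where "d > 0"
      and d: "\<forall>h. 0 < h \<longrightarrow> h < d \<longrightarrow> t + h \<le> b \<longrightarrow> f t - \<epsilon> * h \<le> f (t + h)"
      using dini \<epsilon>(1) by blast
    have "f t + 2 * \<epsilon> * (t - a) < f (t + h) + 2 * \<epsilon> * (t + h - a)"
      if "0 < h" "h < d" "t + h \<le> b" for h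
    proof -
      have "f t - \<epsilon> * h \<le> f (t + h)" using d that by blast
      moreover have "0 < \<epsilon> * h" using \<epsilon>(1) that(1) by simp
      ultimately show ?thesis by (simp add: algebra_simps)
    qed
    with \<open>d > 0\<close> show "\<exists>d>0. \<forall>h. 0 < h \<longrightarrow> h < d \<longrightarrow> t + h \<le> b \<longrightarrow>
        f t + 2 * \<epsilon> * (t - a) < f (t + h) + 2 * \<epsilon> * (t + h - a)"
      by blast
  qed
  with \<epsilon>(2) show "f a \<le> f b + e" by simp
qed

lemma exp_mult_step_lower_bound:
  fixes a b s h e :: real
  assumes "0 \<le> a" "0 < h" "h \<le> 1" "2 * (exp s * a * h) \<le> e"
    and step: "a - h * (a + e / (2 * exp (s + 1))) \<le> b"
  shows "exp s * a - e * h \<le> exp (s + h) * b"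
proof -
  define C E where "C = exp s * a" and "E = exp (s + h)"
  define P Q where "P = E * (1 - h) * a" and "Q = E * (h * (e / (2 * exp (s + 1))))"
  have "0 \<le> 2 * (exp s * a * h)" using assms(1,2) by simp
  with assms(4) have "0 \<le> e" by linarith
  have "E \<le> exp (s + 1)" using assms(3) by (simp add: E_def)
  then have "E * (e * h) \<le> exp (s + 1) * (e * h)"
    using \<open>0 \<le> e\<close> assms(2) by (intro mult_right_mono) auto
  then have Q: "2 * Q \<le> e * h" by (simp add: Q_def field_simps)
  have "exp s * (1 + h) \<le> E"
    by (simp add: E_def exp_add mult_left_mono exp_ge_add_one_self)
  then have "exp s * (1 + h) * ((1 - h) * a) \<le> E * ((1 - h) * a)"
    using assms(1,3) by (intro mult_right_mono) auto
  then have "C - (C * h) * h \<le> P" by (simp add: C_def P_def algebra_simps)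
  moreover have "2 * ((C * h) * h) \<le> e * h"
    using assms(2,4) by (simp add: C_def mult_right_mono flip: mult.assoc)
  moreover have "E * (a - h * (a + e / (2 * exp (s + 1)))) \<le> E * b"
    using step by (simp add: E_def)
  moreover have "E * (a - h * (a + e / (2 * exp (s + 1)))) = P - Q"
    by (simp add: P_def Q_def algebra_simps)
  ultimately have "C - e * h \<le> E * b" using Q by linarith
  then show ?thesis by (simp add: C_def E_def)
qed

text \<open>The hypothesis bounds the lower right Dini derivative of \<open>exp s * g s\<close> from below by
  \<open>- e\<close>, for every \<open>e > 0\<close>.\<close>

lemma exp_lower_bound_of_right_dini:
  fixes g :: "real \<Rightarrow> real"
  assumes cont: "continuous_on {0..T} g" and nonneg: "\<And>t. t \<in> {0..T} \<Longrightarrow> 0 \<le> g t"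
    and dini: "\<And>t e. 0 \<le> t \<Longrightarrow> t < T \<Longrightarrow> 0 < e \<Longrightarrow>
      \<exists>d>0. \<forall>h. 0 < h \<longrightarrow> h < d \<longrightarrow> t + h \<le> T \<longrightarrow> g t - h * (g t + e) \<le> g (t + h)"
    and t: "t \<in> {0..T}"
  shows "g 0 * exp (- t) \<le> g t"
proof -
  have "exp 0 * g 0 \<le> exp t * g t"
  proof (rule le_if_right_dini_nonneg[where f = "\<lambda>s. exp s * g s"])
    show "0 \<le> t" using t by simp
    show "continuous_on {0..t} (\<lambda>s. exp s * g s)"
      using t by (intro continuous_intros continuous_on_subset[OF cont]) auto
    fix s e :: real assume s: "0 \<le> s" "s < t" and "0 < e"
    define C where "C = exp s * g s"
    have C: "0 \<le> C" using nonneg[of s] s t by (simp add: C_def)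
    obtain d where "d > 0" and d: "\<forall>h. 0 < h \<longrightarrow> h < d \<longrightarrow> s + h \<le> T \<longrightarrow>
        g s - h * (g s + e / (2 * exp (s + 1))) \<le> g (s + h)"
      using dini[of s "e / (2 * exp (s + 1))"] s t \<open>0 < e\<close> by auto
    define d' where "d' = min d (min 1 (e / (2 * (C + 1))))"
    have "exp s * g s - e * h \<le> exp (s + h) * g (s + h)"
      if h: "0 < h" "h < d'" "s + h \<le> t" for h
    proof (rule exp_mult_step_lower_bound)
      have "h < e / (2 * (C + 1))" using h by (simp add: d'_def)
      moreover have "0 < 2 * (C + 1)" using C by simp
      ultimately have "h * (2 * (C + 1)) < e" by (simp only: pos_less_divide_eq)
      moreover have "2 * (C * h) \<le> h * (2 * (C + 1))" using h by (simp add: algebra_simps)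
      ultimately show "2 * (exp s * g s * h) \<le> e" by (simp add: C_def)
      show "g s - h * (g s + e / (2 * exp (s + 1))) \<le> g (s + h)"
        using d h t by (simp add: d'_def)
    qed (use h nonneg[of s] s t in \<open>auto simp: d'_def\<close>)
    moreover have "0 < d'" using \<open>d > 0\<close> \<open>0 < e\<close> C by (simp add: d'_def)
    ultimately show "\<exists>d>0. \<forall>h. 0 < h \<longrightarrow> h < d \<longrightarrow> s + h \<le> t \<longrightarrow>
        exp s * g s - e * h \<le> exp (s + h) * g (s + h)"
      by blast
  qed
  then show ?thesis by (simp add: exp_minus field_simps)
qed

section \<open>Retraction onto a ball\<close>

definition ball_retraction :: "'a::real_normed_vector \<Rightarrow> real \<Rightarrow> 'a \<Rightarrow> 'a" where
  "ball_retraction c R y = c + min 1 (R / norm (y - c)) *\<^sub>R (y - c)"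

lemma ball_retraction_in_cball:
  assumes "0 \<le> R"
  shows "norm (ball_retraction c R y - c) \<le> R"
proof (cases "y = c")
  case False
  then have "norm (ball_retraction c R y - c) = min 1 (R / norm (y - c)) * norm (y - c)"
    using assms by (simp add: ball_retraction_def)
  also have "\<dots> \<le> R / norm (y - c) * norm (y - c)"
    by (intro mult_right_mono) auto
  finally show ?thesis using False by simp
qed (simp add: ball_retraction_def assms)

lemma ball_retraction_id:
  assumes "norm (y - c) \<le> R"
  shows "ball_retraction c R y = y"
proof (cases "y = c")
  case False
  with assms have "min 1 (R / norm (y - c)) = 1" by (simp add: field_simps)
  then show ?thesis by (simp add: ball_retraction_def)
qed (simp add: ball_retraction_def)

lemma ball_retraction_variational:
  fixes y z c :: "'a::real_inner"
  assumes R: "0 < R" and z: "norm (z - c) \<le> R"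
  shows "inner (y - ball_retraction c R y) (z - ball_retraction c R y) \<le> 0"
proof (cases "norm (y - c) \<le> R")
  case False
  define n where "n = norm (y - c)"
  define s where "s = R / n"
  have n: "R < n" using False by (simp add: n_def)
  then have s: "0 < s" "s < 1" using R by (simp_all add: s_def)
  have P: "ball_retraction c R y = c + s *\<^sub>R (y - c)"
    using s by (simp add: ball_retraction_def s_def n_def)
  have "inner (y - c) (z - c) \<le> n * R"
    using norm_cauchy_schwarz[of "y - c" "z - c"] z mult_left_mono[OF z, of n]
    by (simp add: n_def)
  moreover have "s * (n * n) = n * R" using n R by (simp add: s_def)
  moreover have "n * n = inner (y - c) (y - c)" by (simp add: n_def flip: power2_eq_square power2_norm_eq_inner)
  ultimately have "inner (y - c) ((z - c) - s *\<^sub>R (y - c)) \<le> 0"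
    by (simp add: inner_diff_right)
  then have "(1 - s) * inner (y - c) ((z - c) - s *\<^sub>R (y - c)) \<le> 0"
    using s by (simp add: mult_nonneg_nonpos)
  moreover have "y - ball_retraction c R y = (1 - s) *\<^sub>R (y - c)"
    and "z - ball_retraction c R y = (z - c) - s *\<^sub>R (y - c)"
    by (simp_all add: P algebra_simps)
  ultimately show ?thesis by (simp only: inner_scaleR_left)
qed (simp add: ball_retraction_id)

lemma ball_retraction_nonexpansive:
  fixes y w c :: "'a::real_inner"
  assumes R: "0 < R"
  shows "norm (ball_retraction c R y - ball_retraction c R w) \<le> norm (y - w)"
proof -
  let ?P = "ball_retraction c R"
  have "inner (y - ?P y) (?P w - ?P y) \<le> 0" "inner (w - ?P w) (?P y - ?P w) \<le> 0"
    using R by (auto intro!: ball_retraction_variational ball_retraction_in_cball)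
  moreover have "inner (y - ?P y) (?P w - ?P y) + inner (w - ?P w) (?P y - ?P w)
      = inner (?P y - ?P w) (?P y - ?P w) - inner (y - w) (?P y - ?P w)"
    by (simp add: inner_diff_left inner_diff_right inner_commute algebra_simps)
  ultimately have "norm (?P y - ?P w) ^ 2 \<le> inner (y - w) (?P y - ?P w)"
    by (simp add: power2_norm_eq_inner)
  also have "\<dots> \<le> norm (y - w) * norm (?P y - ?P w)" by (rule norm_cauchy_schwarz)
  finally show ?thesis
    by (cases "?P y = ?P w") (simp_all add: power2_eq_square mult_le_cancel_right)
qed

lemma ball_retraction_inner_nonpos:
  fixes y c v :: "'a::real_inner"
  assumes "0 < R" and "inner (ball_retraction c R y - c) v \<le> 0"
  shows "inner (y - c) v \<le> 0"
proof (cases "y = c")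
  case False
  with assms have "0 < min 1 (R / norm (y - c))" by simp
  with assms(2) show ?thesis by (simp add: ball_retraction_def mult_le_0_iff)
qed simp

section \<open>The feedback law\<close>

lemma abs_power_diff_le:
  fixes a b R :: real
  assumes a: "0 \<le> a" "a \<le> R" and b: "0 \<le> b" "b \<le> R"
  shows "\<bar>a ^ n - b ^ n\<bar> \<le> n * R ^ (n - 1) * \<bar>a - b\<bar>"
proof (induction n)
  case (Suc n)
  have "a ^ Suc n - b ^ Suc n = a * (a ^ n - b ^ n) + (a - b) * b ^ n"
    by (simp add: algebra_simps)
  then have "\<bar>a ^ Suc n - b ^ Suc n\<bar> \<le> a * \<bar>a ^ n - b ^ n\<bar> + \<bar>a - b\<bar> * b ^ n"
    using a b by (simp add: abs_mult abs_triangle_ineq[THEN order_trans])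
  also have "\<dots> \<le> R * (n * R ^ (n - 1) * \<bar>a - b\<bar>) + \<bar>a - b\<bar> * R ^ n"
    using a b by (intro add_mono mult_mono Suc.IH power_mono mult_left_mono) auto
  also have "\<dots> = Suc n * R ^ (Suc n - 1) * \<bar>a - b\<bar>"
    by (cases n) (simp_all add: algebra_simps)
  finally show ?case .
qed simp

locale closed_loop =
  fixes A :: "'a::{real_inner, complete_space} \<Rightarrow> 'a set" and \<theta> :: real and p :: nat and z0 :: 'a
  assumes maximal: "maximal_monotone A" and \<theta>_pos: "0 < \<theta>" and zero: "0 \<in> A z0"
begin

definition residual :: "real \<Rightarrow> 'a \<Rightarrow> real" where
  "residual l x = norm (x - resolvent A l x)"

definition feedback :: "real \<Rightarrow> 'a \<Rightarrow> real" where
  "feedback l x = l * residual l x ^ (p - 1)"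

text \<open>The root of \<open>feedback l x = \<theta>\<close> if it lies in \<open>(0, M)\<close>, else the cap \<open>M\<close>. Unlike the
  root itself, this is Lipschitz in \<open>x\<close> on bounded sets.\<close>

definition lam_cap :: "real \<Rightarrow> 'a \<Rightarrow> real" where
  "lam_cap M x = (if feedback M x \<le> \<theta> then M else (THE l. 0 < l \<and> feedback l x = \<theta>))"

lemma residual_nonneg: "0 \<le> residual l x"
  by (simp add: residual_def)

lemma residual_le_dist: "0 < l \<Longrightarrow> residual l x \<le> norm (x - z0)"
  unfolding residual_def by (rule residual_le_dist_zero[OF maximal _ zero])

lemma residual_mono: "0 < l \<Longrightarrow> l \<le> m \<Longrightarrow> residual l x \<le> residual m x"
  unfolding residual_def by (rule residual_mono_param[OF maximal])

lemma residual_eq_0_iff: "0 < l \<Longrightarrow> residual l x = 0 \<longleftrightarrow> 0 \<in> A x"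
  unfolding residual_def using resolvent_eq_self_iff[OF maximal] by (metis eq_iff_diff_eq_0 norm_eq_zero)

lemma residual_lipschitz:
  assumes "0 < l"
  shows "\<bar>residual l x - residual l y\<bar> \<le> norm (x - y)"
  unfolding residual_def
  using norm_triangle_ineq3 residual_nonexpansive[OF maximal assms] by (rule order_trans)

lemma residual_lipschitz_param:
  assumes l: "0 < l" and m: "0 < m"
  shows "\<bar>residual l x - residual m x\<bar> \<le> \<bar>m - l\<bar> / m * residual m x"
proof -
  have "\<bar>residual l x - residual m x\<bar> \<le> norm ((x - resolvent A l x) - (x - resolvent A m x))"
    unfolding residual_def by (rule norm_triangle_ineq3)
  also have "\<dots> = norm (resolvent A l x - resolvent A m x)"
    by (simp add: norm_minus_commute)
  also have "\<dots> \<le> \<bar>m - l\<bar> / m * residual m x"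
    unfolding residual_def by (rule resolvent_lipschitz_param[OF maximal l m])
  finally show ?thesis .
qed

lemma feedback_ratio_mono:
  assumes l: "0 < l" and "l \<le> m"
  shows "m * feedback l x \<le> l * feedback m x"
proof -
  have "residual l x ^ (p - 1) \<le> residual m x ^ (p - 1)"
    using assms by (intro power_mono residual_mono residual_nonneg)
  then have "(m * l) * residual l x ^ (p - 1) \<le> (m * l) * residual m x ^ (p - 1)"
    using assms by (intro mult_left_mono) auto
  then show ?thesis by (simp add: feedback_def algebra_simps)
qed

lemma feedback_gt_if_root:
  assumes l: "0 < l" and "l < m" and root: "feedback l x = \<theta>"
  shows "\<theta> < feedback m x"
proof -
  have "m * \<theta> \<le> l * feedback m x"
    using feedback_ratio_mono[OF l, of m x] assms by simp
  moreover have "l * \<theta> < m * \<theta>" using assms \<theta>_pos by simp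
  ultimately have "l * \<theta> < l * feedback m x" by linarith
  then show ?thesis using l by simp
qed

lemma feedback_root_unique:
  "0 < l \<Longrightarrow> 0 < m \<Longrightarrow> feedback l x = \<theta> \<Longrightarrow> feedback m x = \<theta> \<Longrightarrow> l = m"
  by (metis linorder_neqE_linordered_idom order_less_irrefl feedback_gt_if_root)

lemma feedback_le: "0 < l \<Longrightarrow> feedback l x \<le> l * norm (x - z0) ^ (p - 1)"
  unfolding feedback_def by (intro mult_left_mono power_mono residual_le_dist residual_nonneg) auto

lemma continuous_on_feedback:
  assumes a: "0 < a"
  shows "continuous_on {a..b} (\<lambda>l. feedback l x)"
proof -
  have "(norm (x - z0) / a)-lipschitz_on {a..b} (\<lambda>l. residual l x)"
  proof (rule lipschitz_onI)
    fix l m assume lm: "l \<in> {a..b}" "m \<in> {a..b}"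
    then have l: "0 < l" and m: "0 < m" using a by auto
    have "\<bar>residual l x - residual m x\<bar> \<le> \<bar>m - l\<bar> / m * residual m x"
      by (rule residual_lipschitz_param[OF l m])
    also have "\<dots> \<le> \<bar>m - l\<bar> / a * norm (x - z0)"
      using lm a by (intro mult_mono divide_left_mono residual_le_dist m residual_nonneg) auto
    finally show "dist (residual l x) (residual m x) \<le> norm (x - z0) / a * dist l m"
      by (simp add: dist_real_def abs_minus_commute field_simps)
  qed (use a in simp)
  then show ?thesis
    unfolding feedback_def by (intro continuous_intros lipschitz_on_continuous_on)
qed

lemma feedback_root_exists:
  assumes M: "0 < M" and above: "\<theta> < feedback M x"
  shows "\<exists>l. 0 < l \<and> l < M \<and> feedback l x = \<theta>"
proof -
  define K where "K = norm (x - z0) ^ (p - 1) + 1"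
  have K: "0 < K" by (simp add: K_def add_nonneg_pos)
  define e where "e = min (M / 2) (\<theta> / (2 * K))"
  have e: "0 < e" "e \<le> M" using M \<theta>_pos K by (auto simp: e_def)
  have "feedback e x \<le> e * norm (x - z0) ^ (p - 1)" by (rule feedback_le[OF e(1)])
  also have "\<dots> \<le> e * K" using e by (intro mult_left_mono) (auto simp: K_def)
  also have "\<dots> \<le> \<theta> / (2 * K) * K" using K by (intro mult_right_mono) (auto simp: e_def)
  also have "\<dots> < \<theta>" using K \<theta>_pos by simp
  finally have below: "feedback e x < \<theta>" .
  obtain l where l: "e \<le> l" "l \<le> M" "feedback l x = \<theta>"
    using IVT'[of "\<lambda>l. feedback l x" e \<theta> M, OF _ _ e(2) continuous_on_feedback[OF e(1)]] below above
    by auto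
  moreover from l above have "l \<noteq> M" by auto
  ultimately show ?thesis using e by (intro exI[of _ l]) auto
qed

lemma lam_cap_if_above:
  assumes M: "0 < M" and above: "\<not> feedback M x \<le> \<theta>"
  shows "0 < lam_cap M x" and "lam_cap M x < M" and "feedback (lam_cap M x) x = \<theta>"
proof -
  have "\<theta> < feedback M x" using above by simp
  with feedback_root_exists[OF M] obtain l where l: "0 < l" "l < M" "feedback l x = \<theta>"
    by blast
  have "lam_cap M x = l"
    unfolding lam_cap_def if_not_P[OF above]
    by (rule the_equality) (use l feedback_root_unique in auto)
  with l show "0 < lam_cap M x" "lam_cap M x < M" "feedback (lam_cap M x) x = \<theta>" by simp_all
qed

lemma lam_cap_pos: "0 < M \<Longrightarrow> 0 < lam_cap M x"
  using lam_cap_if_above(1) by (cases "feedback M x \<le> \<theta>") (auto simp: lam_cap_def)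

lemma lam_cap_le: "0 < M \<Longrightarrow> lam_cap M x \<le> M"
  using lam_cap_if_above(2) by (cases "feedback M x \<le> \<theta>") (auto simp: lam_cap_def less_imp_le)

lemma feedback_lam_cap_le: "0 < M \<Longrightarrow> feedback (lam_cap M x) x \<le> \<theta>"
  using lam_cap_if_above(3) by (cases "feedback M x \<le> \<theta>") (auto simp: lam_cap_def)

lemma feedback_lam_cap_eq: "0 < M \<Longrightarrow> lam_cap M x < M \<Longrightarrow> feedback (lam_cap M x) x = \<theta>"
  using lam_cap_if_above(3) by (cases "feedback M x \<le> \<theta>") (auto simp: lam_cap_def)

lemma feedback_lam_cap_mono:
  assumes M: "0 < M" and less: "lam_cap M y < lam_cap M x"
  shows "feedback (lam_cap M x) x \<le> feedback (lam_cap M y) y"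
proof -
  have "lam_cap M y < M" using less lam_cap_le[OF M, of x] by linarith
  then show ?thesis using feedback_lam_cap_eq[OF M] feedback_lam_cap_le[OF M] by simp
qed

lemma lam_cap_eqI:
  assumes l: "0 < l" "l < M" "feedback l x = \<theta>"
  shows "lam_cap M x = l"
proof -
  have M: "0 < M" using l by simp
  have "\<not> feedback M x \<le> \<theta>" using feedback_gt_if_root[OF l] by simp
  from lam_cap_if_above[OF M this] l show ?thesis using feedback_root_unique by blast
qed

lemma lam_cap_lower_bound:
  assumes M: "0 < M" and R: "0 < R" and x: "norm (x - z0) \<le> R"
  shows "min M (\<theta> / R ^ (p - 1)) \<le> lam_cap M x"
proof (cases "lam_cap M x < M")
  case True
  let ?l = "lam_cap M x"
  have "\<theta> = ?l * residual ?l x ^ (p - 1)"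
    using feedback_lam_cap_eq[OF M True] by (simp add: feedback_def)
  also have "\<dots> \<le> ?l * R ^ (p - 1)"
    using lam_cap_pos[OF M] residual_le_dist[OF lam_cap_pos[OF M]] x
    by (intro mult_left_mono power_mono) (auto intro: residual_nonneg order_trans less_imp_le)
  finally have "\<theta> / R ^ (p - 1) \<le> ?l" using R by (simp add: field_simps)
  then show ?thesis by simp
next
  case False
  then show ?thesis using lam_cap_le[OF M, of x] by simp
qed

text \<open>At the larger value \<open>m = lam_cap M y\<close>, \<open>feedback m\<close> exceeds \<open>\<theta>\<close> at \<open>x\<close> by a factor
  \<open>m / lam_cap M x\<close> but is at most \<open>\<theta>\<close> at \<open>y\<close>; its variation in the point bounds that factor.\<close>

lemma lam_cap_increase_le:
  assumes M: "0 < M" and R: "0 < R" and x: "norm (x - z0) \<le> R" and y: "norm (y - z0) \<le> R"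
    and le: "lam_cap M x \<le> lam_cap M y"
  shows "lam_cap M y - lam_cap M x \<le> M\<^sup>2 * (real (p - 1) * R ^ (p - 2)) / \<theta> * norm (x - y)"
proof (cases "lam_cap M x = lam_cap M y")
  case False
  define l m where "l = lam_cap M x" and "m = lam_cap M y"
  define D where "D = real (p - 1) * R ^ (p - 2) * norm (x - y)"
  have lm: "l < m" using le False by (simp add: l_def m_def)
  have l: "0 < l" and m: "0 < m" "m \<le> M"
    using lam_cap_pos lam_cap_le M by (auto simp: l_def m_def)
  have "feedback l x = \<theta>" using feedback_lam_cap_eq[OF M] lm m(2) by (simp add: l_def)
  then have "m * \<theta> \<le> l * feedback m x" using feedback_ratio_mono[OF l, of m x] lm by simp
  have "\<bar>residual m x ^ (p - 1) - residual m y ^ (p - 1)\<bar>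
      \<le> real (p - 1) * R ^ (p - 1 - 1) * \<bar>residual m x - residual m y\<bar>"
    using residual_nonneg residual_le_dist[OF m(1)] x y
    by (intro abs_power_diff_le) (auto intro: order_trans)
  also have "\<dots> \<le> real (p - 1) * R ^ (p - 1 - 1) * norm (x - y)"
    using R by (intro mult_left_mono residual_lipschitz m(1)) auto
  finally have "residual m x ^ (p - 1) - residual m y ^ (p - 1) \<le> D"
    by (simp add: D_def numeral_2_eq_2)
  then have "m * (residual m x ^ (p - 1) - residual m y ^ (p - 1)) \<le> m * D"
    using m by (intro mult_left_mono) auto
  then have "feedback m x \<le> feedback m y + m * D" by (simp add: feedback_def algebra_simps)
  moreover have "feedback m y \<le> \<theta>" using feedback_lam_cap_le[OF M] by (simp add: m_def)
  moreover have "0 \<le> D" using R by (simp add: D_def)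
  ultimately have "l * feedback m x \<le> l * (\<theta> + m * D)"
    using l by (intro mult_left_mono) auto
  with \<open>m * \<theta> \<le> l * feedback m x\<close> have "(m - l) * \<theta> \<le> l * m * D"
    by (simp add: algebra_simps)
  also have "\<dots> \<le> M * M * D" using l m lm \<open>0 \<le> D\<close> by (intro mult_mono) auto
  finally have "m - l \<le> M\<^sup>2 * D / \<theta>" using \<theta>_pos by (simp add: field_simps power2_eq_square)
  then show ?thesis by (simp add: l_def m_def D_def)
qed (use M R \<theta>_pos in simp)

lemma lam_cap_lipschitz:
  assumes "0 < M" and "0 < R" and "norm (x - z0) \<le> R" and "norm (y - z0) \<le> R"
  shows "\<bar>lam_cap M x - lam_cap M y\<bar> \<le> M\<^sup>2 * (real (p - 1) * R ^ (p - 2)) / \<theta> * norm (x - y)"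
proof (cases "lam_cap M x \<le> lam_cap M y")
  case True
  with lam_cap_increase_le[OF assms True] show ?thesis
    unfolding abs_le_iff by linarith
next
  case False
  then have "lam_cap M y \<le> lam_cap M x" by simp
  with lam_cap_increase_le[OF assms(1,2,4,3)] show ?thesis
    unfolding abs_le_iff norm_minus_commute[of y x] by linarith
qed

lemma residual_ge_if_feedback_le:
  assumes l: "0 < l" and m: "0 < m" and le: "m < l \<Longrightarrow> feedback l x \<le> feedback m y"
  shows "residual l x - norm (y - x) \<le> residual m y"
proof (cases "l \<le> m")
  case True
  then have "residual l y \<le> residual m y" by (rule residual_mono[OF l])
  moreover have "\<bar>residual l x - residual l y\<bar> \<le> norm (x - y)" by (rule residual_lipschitz[OF l])
  ultimately show ?thesis by (simp add: norm_minus_commute abs_le_iff)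
next
  case False
  then have ml: "m < l" by simp
  show ?thesis
  proof (cases "residual l x = 0")
    case False
    then have pos: "0 < residual l x ^ (p - 1)" using residual_nonneg[of l x] by simp
    have "m * residual l x ^ (p - 1) < l * residual l x ^ (p - 1)" using ml pos by simp
    also have "\<dots> \<le> m * residual m y ^ (p - 1)" using le[OF ml] by (simp add: feedback_def)
    finally have "residual l x ^ (p - 1) < residual m y ^ (p - 1)" using m by simp
    then have "residual l x < residual m y" by (rule power_less_imp_less_base) (rule residual_nonneg)
    then show ?thesis using norm_ge_zero[of "y - x"] by linarith
  qed (use residual_nonneg[of m y] norm_ge_zero[of "y - x"] in linarith)
qed

text \<open>Along a trajectory the residual can drop at most by the distance travelled, and the
  speed is the residual itself; so its lower right Dini derivative is at least minus itself.\<close>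

lemma residual_exp_lower_bound:
  assumes x: "\<And>t. t \<in> {0..T} \<Longrightarrow>
      (x has_vector_derivative (resolvent A (lam t) (x t) - x t)) (at t within {0..})"
    and lam: "\<And>t. t \<in> {0..T} \<Longrightarrow> 0 < lam t"
    and feedback: "\<And>s t. s \<in> {0..T} \<Longrightarrow> t \<in> {0..T} \<Longrightarrow> lam s < lam t \<Longrightarrow>
      feedback (lam t) (x t) \<le> feedback (lam s) (x s)"
    and t: "t \<in> {0..T}"
  shows "residual (lam 0) (x 0) * exp (- t) \<le> residual (lam t) (x t)"
proof -
  define g where "g s = residual (lam s) (x s)" for s
  have step: "g t - norm (x s - x t) \<le> g s" if "s \<in> {0..T}" "t \<in> {0..T}" for s t
    unfolding g_def
    by (rule residual_ge_if_feedback_le[OF lam[OF that(2)] lam[OF that(1)] feedback[OF that]])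
  have "continuous_on {0..T} x"
    unfolding continuous_on_eq_continuous_within
  proof
    fix s assume "s \<in> {0..T}"
    from has_vector_derivative_continuous[OF x[OF this]]
    show "continuous (at s within {0..T}) x" by (rule continuous_within_subset) auto
  qed
  then have "continuous_on {0..T} g"
    by (rule continuous_on_if_dist_le)
      (use step in \<open>fastforce simp: dist_real_def dist_norm norm_minus_commute abs_le_iff\<close>)
  then have "g 0 * exp (- t) \<le> g t"
  proof (rule exp_lower_bound_of_right_dini)
    fix s e :: real assume s: "0 \<le> s" "s < T" and "0 < e"
    then obtain d where "d > 0"
      and d: "\<forall>h. 0 < h \<longrightarrow> h < d \<longrightarrow> norm (x (s + h) - x s) \<le> h * (g s + e)"
      using norm_increment_le[OF x] by (fastforce simp: g_def residual_def norm_minus_commute)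
    have "g s - h * (g s + e) \<le> g (s + h)" if "0 < h" "h < d" "s + h \<le> T" for h
      using d step[of "s + h" s] s that by (force simp: norm_minus_commute)
    with \<open>d > 0\<close> show "\<exists>d>0. \<forall>h. 0 < h \<longrightarrow> h < d \<longrightarrow> s + h \<le> T \<longrightarrow> g s - h * (g s + e) \<le> g (s + h)"
      by blast
  qed (use t in \<open>simp_all add: g_def residual_nonneg\<close>)
  then show ?thesis by (simp add: g_def)
qed

end

section \<open>The closed-loop system\<close>

locale closed_loop_start = closed_loop +
  fixes x0 :: 'a
  assumes start: "0 \<notin> A x0"
begin

definition R :: real where "R = norm (x0 - z0)"

lemma R_pos: "0 < R"
  using start zero by (auto simp: R_def)

text \<open>Solutions starting at \<open>x0\<close> stay in the ball of radius \<open>R\<close> about the zero \<open>z0\<close>;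
  retracting onto that ball makes the field of the capped system globally Lipschitz.\<close>

definition capped_field :: "real \<Rightarrow> 'a \<Rightarrow> 'a" where
  "capped_field M y = resolvent A (lam_cap M (ball_retraction z0 R y)) (ball_retraction z0 R y)
     - ball_retraction z0 R y"

definition cap_lipschitz :: "real \<Rightarrow> real" where
  "cap_lipschitz M = M\<^sup>2 * (real (p - 1) * R ^ (p - 2)) / \<theta>"

definition field_lipschitz :: "real \<Rightarrow> real" where
  "field_lipschitz M = 2 + cap_lipschitz M * R / min M (\<theta> / R ^ (p - 1))"

lemma cap_lipschitz_nonneg: "0 \<le> cap_lipschitz M"
  using \<theta>_pos R_pos by (simp add: cap_lipschitz_def)

lemma lam_cap_lipschitz_ball:
  assumes "0 < M" and "norm (x - z0) \<le> R" and "norm (y - z0) \<le> R"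
  shows "\<bar>lam_cap M x - lam_cap M y\<bar> \<le> cap_lipschitz M * norm (x - y)"
  unfolding cap_lipschitz_def by (rule lam_cap_lipschitz[OF assms(1) R_pos assms(2,3)])

lemma capped_field_eq: "norm (y - z0) \<le> R \<Longrightarrow> capped_field M y = resolvent A (lam_cap M y) y - y"
  by (simp add: capped_field_def ball_retraction_id)

lemma inner_capped_field_nonpos: "0 < M \<Longrightarrow> inner (y - z0) (capped_field M y) \<le> 0"
  unfolding capped_field_def
  by (rule ball_retraction_inner_nonpos[OF R_pos],
      rule inner_resolvent_step_nonpos[OF maximal lam_cap_pos zero])

lemma capped_field_lipschitz:
  assumes M: "0 < M"
  shows "(field_lipschitz M)-lipschitz_on UNIV (capped_field M)"
proof (rule lipschitz_onI)
  let ?m = "min M (\<theta> / R ^ (p - 1))" and ?K = "cap_lipschitz M"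
  have m_pos: "0 < ?m" using M \<theta>_pos R_pos by simp
  show "0 \<le> field_lipschitz M"
    using m_pos R_pos cap_lipschitz_nonneg[of M] by (simp add: field_lipschitz_def)
  fix y w :: 'a
  define a b where "a = ball_retraction z0 R y" and "b = ball_retraction z0 R w"
  define l m where "l = lam_cap M a" and "m = lam_cap M b"
  have ab: "norm (a - b) \<le> norm (y - w)"
    unfolding a_def b_def by (rule ball_retraction_nonexpansive[OF R_pos])
  have a_in: "norm (a - z0) \<le> R" and b_in: "norm (b - z0) \<le> R"
    using R_pos by (simp_all add: a_def b_def ball_retraction_in_cball)
  have l: "0 < l" and m: "0 < m" using lam_cap_pos M by (auto simp: l_def m_def)
  have "\<bar>m - l\<bar> / m * residual m b \<le> (?K * norm (a - b)) / ?m * R"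
  proof (intro mult_mono frac_le)
    show "\<bar>m - l\<bar> \<le> ?K * norm (a - b)"
      using lam_cap_lipschitz_ball[OF M a_in b_in] by (simp add: l_def m_def abs_minus_commute)
    show "?m \<le> m" unfolding m_def by (rule lam_cap_lower_bound[OF M R_pos b_in])
    show "residual m b \<le> R" using residual_le_dist[OF m] b_in by (rule order_trans)
  qed (use m_pos cap_lipschitz_nonneg[of M] in \<open>simp_all add: residual_nonneg\<close>)
  then have "norm (resolvent A l a - resolvent A m b) \<le> norm (a - b) + ?K * R / ?m * norm (a - b)"
    using norm_triangle_ineq[of "resolvent A l a - resolvent A l b" "resolvent A l b - resolvent A m b"]
      resolvent_nonexpansive[OF maximal l, of a b] resolvent_lipschitz_param[OF maximal l m, of b]
    by (simp add: residual_def field_simps)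
  then have "norm ((resolvent A l a - a) - (resolvent A m b - b)) \<le> (2 + ?K * R / ?m) * norm (a - b)"
    using norm_triangle_ineq4[of "resolvent A l a - resolvent A m b" "a - b"]
    by (simp add: algebra_simps)
  also have "\<dots> \<le> field_lipschitz M * norm (y - w)"
    using ab m_pos R_pos cap_lipschitz_nonneg[of M]
    by (simp add: field_lipschitz_def mult_left_mono)
  finally show "dist (capped_field M y) (capped_field M w) \<le> field_lipschitz M * dist y w"
    by (simp add: capped_field_def dist_norm a_def b_def l_def m_def)
qed

lemma initial_lam_exists: "\<exists>l. 0 < l \<and> feedback l x0 = \<theta>"
proof -
  define c where "c = residual 1 x0 ^ (p - 1)"
  have "residual 1 x0 \<noteq> 0" using residual_eq_0_iff[of 1 x0] start by simp
  then have c: "0 < c" using residual_nonneg[of 1 x0] by (simp add: c_def)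
  define M where "M = max 1 (\<theta> / c) + 1"
  have M: "1 \<le> M" "0 < M" by (auto simp: M_def)
  have "\<theta> / c < M" by (simp add: M_def)
  then have "\<theta> < M * c" by (simp only: pos_divide_less_eq[OF c])
  also have "\<dots> \<le> feedback M x0"
    unfolding feedback_def c_def using M
    by (intro mult_left_mono power_mono residual_mono residual_nonneg) auto
  finally show ?thesis using feedback_root_exists[OF M(2)] by blast
qed

definition lam0 :: real where "lam0 = (THE l. 0 < l \<and> feedback l x0 = \<theta>)"

lemma lam0: "0 < lam0" "feedback lam0 x0 = \<theta>"
proof -
  obtain l where l: "0 < l" "feedback l x0 = \<theta>" using initial_lam_exists by blast
  have "lam0 = l"
    unfolding lam0_def by (rule the_equality) (use l feedback_root_unique in auto)
  with l show "0 < lam0" "feedback lam0 x0 = \<theta>" by simp_all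
qed

lemma lam0_unique: "0 < l \<Longrightarrow> feedback l x0 = \<theta> \<Longrightarrow> l = lam0"
  using feedback_root_unique lam0 by blast

definition u0 :: real where "u0 = residual lam0 x0"

lemma u0_pos: "0 < u0"
  using residual_eq_0_iff[OF lam0(1), of x0] start residual_nonneg[of lam0 x0] by (simp add: u0_def)

text \<open>Up to time \<open>T\<close> the residual stays above \<open>u0 * exp (- T)\<close>, so the feedback law keeps
  \<open>lam\<close> below \<open>\<theta> / (u0 * exp (- T)) ^ (p - 1)\<close>: capping at \<open>cap T\<close> is then inactive.\<close>

definition cap :: "real \<Rightarrow> real" where
  "cap T = \<theta> / (u0 * exp (- T)) ^ (p - 1) + lam0 + 1"

lemma cap_gt: "0 < cap T" "lam0 < cap T"
  using \<theta>_pos u0_pos lam0(1) by (simp_all add: cap_def add_pos_pos add_nonneg_pos)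

lemma less_cap:
  assumes l: "0 < l" and "feedback l y \<le> \<theta>" and "u0 * exp (- T) \<le> residual l y"
  shows "l < cap T"
proof -
  have pos: "0 < (u0 * exp (- T)) ^ (p - 1)" using u0_pos by simp
  have "l * (u0 * exp (- T)) ^ (p - 1) \<le> feedback l y"
    unfolding feedback_def using assms u0_pos by (intro mult_left_mono power_mono) auto
  with assms(2) have "l * (u0 * exp (- T)) ^ (p - 1) \<le> \<theta>" by simp
  then have "l \<le> \<theta> / (u0 * exp (- T)) ^ (p - 1)"
    by (simp only: pos_le_divide_eq[OF pos])
  then show ?thesis using lam0(1) by (simp add: cap_def)
qed

definition solves_on :: "real \<Rightarrow> (real \<Rightarrow> 'a) \<Rightarrow> (real \<Rightarrow> real) \<Rightarrow> bool" where
  "solves_on T x lam \<longleftrightarrow> x 0 = x0 \<and> (\<forall>t\<in>{0..T}.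
      (x has_vector_derivative (resolvent A (lam t) (x t) - x t)) (at t within {0..}) \<and>
      0 < lam t \<and> feedback (lam t) (x t) = \<theta>)"

lemma solves_on_mono: "solves_on T x lam \<Longrightarrow> T' \<le> T \<Longrightarrow> solves_on T' x lam"
  unfolding solves_on_def by auto

lemma stays_in_ball:
  assumes "x 0 = x0"
    and x: "\<And>s. s \<in> {0..T} \<Longrightarrow> (x has_vector_derivative v s) (at s within {0..})"
    and inward: "\<And>s. s \<in> {0..T} \<Longrightarrow> inner (x s - z0) (v s) \<le> 0"
    and t: "t \<in> {0..T}"
  shows "norm (x t - z0) \<le> R"
proof -
  have "inner (x t - z0) (x t - z0) \<le> exp (0 * t) * inner (x 0 - z0) (x 0 - z0)"
  proof (rule gronwall_differential)
    fix s assume "s \<in> {0..t}"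
    with t have s: "s \<in> {0..T}" by auto
    show "((\<lambda>s. inner (x s - z0) (x s - z0)) has_field_derivative 2 * inner (x s - z0) (v s))
        (at s within {0..t})"
      using x[OF s] by (intro has_field_derivative_inner_diff_self)
        (auto intro: has_vector_derivative_within_subset)
    show "2 * inner (x s - z0) (v s) \<le> 0 * inner (x s - z0) (x s - z0)"
      using inward[OF s] by simp
  qed (use t in simp)
  then have "norm (x t - z0) ^ 2 \<le> R ^ 2"
    by (simp add: \<open>x 0 = x0\<close> R_def power2_norm_eq_inner)
  then show ?thesis by (rule power2_le_imp_le) (use R_pos in simp)
qed

lemma solves_on_bounds:
  assumes S: "solves_on T x lam" and t: "t \<in> {0..T}"
  shows "norm (x t - z0) \<le> R" and "u0 * exp (- t) \<le> residual (lam t) (x t)"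
    and "lam t = lam_cap (cap T) (x t)"
proof -
  have x: "\<And>s. s \<in> {0..T} \<Longrightarrow>
      (x has_vector_derivative (resolvent A (lam s) (x s) - x s)) (at s within {0..})"
    and lam: "\<And>s. s \<in> {0..T} \<Longrightarrow> 0 < lam s"
    and feedback: "\<And>s. s \<in> {0..T} \<Longrightarrow> feedback (lam s) (x s) = \<theta>"
    and "x 0 = x0"
    using S by (auto simp: solves_on_def)
  show "norm (x t - z0) \<le> R"
    using stays_in_ball[OF \<open>x 0 = x0\<close> x _ t] inner_resolvent_step_nonpos[OF maximal lam zero]
    by blast
  have "0 \<in> {0..T}" using t by simp
  then have "lam 0 = lam0" using lam0_unique lam feedback \<open>x 0 = x0\<close> by blast
  with residual_exp_lower_bound[OF x lam _ t] feedback \<open>x 0 = x0\<close>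
  show lower: "u0 * exp (- t) \<le> residual (lam t) (x t)" by (simp add: u0_def)
  have "u0 * exp (- T) \<le> u0 * exp (- t)" using t u0_pos by simp
  with lower have "u0 * exp (- T) \<le> residual (lam t) (x t)" by linarith
  then have "lam t < cap T"
    using less_cap[OF lam[OF t], of "x t"] feedback[OF t] by simp
  then show "lam t = lam_cap (cap T) (x t)"
    using lam_cap_eqI[OF lam[OF t] _ feedback[OF t]] by simp
qed

lemma solves_on_capped_field:
  assumes S: "solves_on T x lam" and s: "s \<in> {0..T}"
  shows "(x has_vector_derivative capped_field (cap T) (x s)) (at s within {0..})"
proof -
  have "(x has_vector_derivative (resolvent A (lam s) (x s) - x s)) (at s within {0..})"
    using S s by (simp add: solves_on_def)
  then show ?thesis
    using solves_on_bounds(1,3)[OF S s] by (simp add: capped_field_eq)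
qed

lemma solves_on_unique:
  assumes x: "solves_on T x lam" and y: "solves_on T y mu" and t: "t \<in> {0..T}"
  shows "x t = y t" and "lam t = mu t"
proof -
  have "x 0 = y 0" using x y by (simp add: solves_on_def)
  with solves_on_capped_field[OF x] solves_on_capped_field[OF y]
  show "x t = y t"
    by (rule lipschitz_ode_unique[OF capped_field_lipschitz[OF cap_gt(1)] _ _ _ t])
  then show "lam t = mu t"
    using solves_on_bounds(3)[OF x t] solves_on_bounds(3)[OF y t] by simp
qed

end

context closed_loop_start
begin

lemma is_cl_solution_solves_on:
  assumes "is_cl_solution A \<theta> p x0 x lam"
  shows "solves_on T x lam"
proof -
  from assms obtain x' where x': "\<forall>t\<ge>0. (x has_vector_derivative x' t) (at t within {0..})"
    and eq: "\<forall>t\<ge>0. x' t + x t - resolvent A (lam t) (x t) = 0"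
    and "\<forall>t\<ge>0. 0 < lam t" "\<forall>t\<ge>0. lam t * norm (resolvent A (lam t) (x t) - x t) ^ (p - 1) = \<theta>"
    and "x 0 = x0"
    unfolding is_cl_solution_def by blast
  moreover have "x' t = resolvent A (lam t) (x t) - x t" if "0 \<le> t" for t
    using eq that by (simp add: algebra_simps eq_diff_eq)
  ultimately show ?thesis
    by (auto simp: solves_on_def feedback_def residual_def norm_minus_commute)
qed

lemma solves_on_initial_lam:
  assumes "solves_on T x lam" and "0 \<le> T"
  shows "lam 0 = lam0"
  using assms lam0_unique by (auto simp: solves_on_def)

lemma capped_solution_exists:
  obtains X where "\<And>t. 0 \<le> t \<Longrightarrow> (X has_vector_derivative capped_field (cap T) (X t)) (at t within {0..})"
    and "\<And>t. 0 \<le> t \<Longrightarrow> norm (X t - z0) \<le> R"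
    and "solves_on T X (\<lambda>t. lam_cap (cap T) (X t))"
proof -
  let ?M = "cap T"
  obtain X where X0: "X 0 = x0"
    and X: "\<And>t. 0 \<le> t \<Longrightarrow> (X has_vector_derivative capped_field ?M (X t)) (at t within {0..})"
    using lipschitz_ode_exists[OF capped_field_lipschitz[OF cap_gt(1)]] by blast
  have ball: "norm (X t - z0) \<le> R" if "0 \<le> t" for t
    using stays_in_ball[OF X0 X inner_capped_field_nonpos[OF cap_gt(1)], of t t] that by auto
  define lam where "lam t = lam_cap ?M (X t)" for t
  have X': "(X has_vector_derivative resolvent A (lam t) (X t) - X t) (at t within {0..})"
    if "0 \<le> t" for t
    using X[OF that] ball[OF that] by (simp add: lam_def capped_field_eq)
  have lam: "0 < lam t" for t by (simp add: lam_def lam_cap_pos cap_gt(1))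
  have lam_X0: "lam 0 = lam0"
    unfolding lam_def X0 by (rule lam_cap_eqI[OF lam0(1) cap_gt(2) lam0(2)])
  have lower: "u0 * exp (- t) \<le> residual (lam t) (X t)" if t: "t \<in> {0..T}" for t
  proof -
    have "residual (lam 0) (X 0) * exp (- t) \<le> residual (lam t) (X t)"
      using residual_exp_lower_bound[OF X' lam _ t] feedback_lam_cap_mono[OF cap_gt(1)]
      by (simp add: lam_def)
    with lam_X0 X0 show ?thesis by (simp add: u0_def)
  qed
  have "lam t < ?M" if t: "t \<in> {0..T}" for t
  proof (rule less_cap[OF lam])
    show "feedback (lam t) (X t) \<le> \<theta>" using feedback_lam_cap_le[OF cap_gt(1)] by (simp add: lam_def)
    have "u0 * exp (- T) \<le> u0 * exp (- t)" using t u0_pos by simp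
    with lower[OF t] show "u0 * exp (- T) \<le> residual (lam t) (X t)" by linarith
  qed
  then have "feedback (lam t) (X t) = \<theta>" if "t \<in> {0..T}" for t
    using feedback_lam_cap_eq[OF cap_gt(1)] that by (simp add: lam_def)
  then have "solves_on T X lam"
    using X0 X' lam by (simp add: solves_on_def)
  with X ball show ?thesis unfolding lam_def by (rule that)
qed

lemma lam_cap_path_lipschitz:
  assumes M: "0 < M"
    and X: "\<And>t. 0 \<le> t \<Longrightarrow> (X has_vector_derivative capped_field M (X t)) (at t within {0..})"
    and ball: "\<And>t. 0 \<le> t \<Longrightarrow> norm (X t - z0) \<le> R"
  shows "(cap_lipschitz M * R)-lipschitz_on {0..} (\<lambda>t. lam_cap M (X t))"
proof (rule lipschitz_onI)
  fix a b :: real assume ab: "a \<in> {0..}" "b \<in> {0..}"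
  have "norm (X a - X b) \<le> R * norm (a - b)"
  proof (rule norm_diff_le_of_derivative_bound[OF X])
    fix s :: real assume "0 \<le> s"
    then have "norm (capped_field M (X s)) = residual (lam_cap M (X s)) (X s)"
      using ball by (simp add: capped_field_eq residual_def norm_minus_commute)
    also have "\<dots> \<le> R"
      using residual_le_dist[OF lam_cap_pos[OF M]] ball[OF \<open>0 \<le> s\<close>] by (rule order_trans)
    finally show "norm (capped_field M (X s)) \<le> R" .
  qed (use ab in auto)
  then show "dist (lam_cap M (X a)) (lam_cap M (X b)) \<le> cap_lipschitz M * R * dist a b"
    using lam_cap_lipschitz_ball[OF M ball ball, of a b] ab cap_lipschitz_nonneg[of M]
    by (simp add: dist_real_def mult.assoc) (meson mult_left_mono order_trans)
qed (simp add: cap_lipschitz_nonneg R_pos less_imp_le)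

definition capped_solution :: "nat \<Rightarrow> real \<Rightarrow> 'a" where
  "capped_solution n = (SOME X.
     (\<forall>t\<ge>0. (X has_vector_derivative capped_field (cap n) (X t)) (at t within {0..})) \<and>
     (\<forall>t\<ge>0. norm (X t - z0) \<le> R) \<and> solves_on n X (\<lambda>t. lam_cap (cap n) (X t)))"

lemma capped_solution:
  shows "0 \<le> t \<Longrightarrow> (capped_solution n has_vector_derivative capped_field (cap n) (capped_solution n t))
      (at t within {0..})"
    and "0 \<le> t \<Longrightarrow> norm (capped_solution n t - z0) \<le> R"
    and "solves_on n (capped_solution n) (\<lambda>t. lam_cap (cap n) (capped_solution n t))"
proof -
  obtain X where "\<And>t. 0 \<le> t \<Longrightarrow> (X has_vector_derivative capped_field (cap n) (X t)) (at t within {0..})"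
    and "\<And>t. 0 \<le> t \<Longrightarrow> norm (X t - z0) \<le> R" and "solves_on n X (\<lambda>t. lam_cap (cap n) (X t))"
    using capped_solution_exists[of "real n"] by blast
  then have "\<exists>X. (\<forall>t\<ge>0. (X has_vector_derivative capped_field (cap n) (X t)) (at t within {0..})) \<and>
      (\<forall>t\<ge>0. norm (X t - z0) \<le> R) \<and> solves_on n X (\<lambda>t. lam_cap (cap n) (X t))"
    by blast
  from someI_ex[OF this, folded capped_solution_def]
  show "0 \<le> t \<Longrightarrow> (capped_solution n has_vector_derivative capped_field (cap n) (capped_solution n t))
      (at t within {0..})"
    and "0 \<le> t \<Longrightarrow> norm (capped_solution n t - z0) \<le> R"
    and "solves_on n (capped_solution n) (\<lambda>t. lam_cap (cap n) (capped_solution n t))"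
    by blast+
qed

text \<open>The global solution follows, at time \<open>t\<close>, the capped solution with cap \<open>cap n\<close> for some
  \<open>n > t\<close>; by uniqueness the choice of \<open>n\<close> does not matter.\<close>

definition horizon :: "real \<Rightarrow> nat" where
  "horizon t = Suc (nat \<lceil>t\<rceil>)"

definition global_x :: "real \<Rightarrow> 'a" where
  "global_x t = capped_solution (horizon t) t"

definition global_lam :: "real \<Rightarrow> real" where
  "global_lam t = lam_cap (cap (horizon t)) (global_x t)"

lemma le_horizon: "dist s t < 1 \<Longrightarrow> s \<le> horizon t"
  unfolding horizon_def dist_real_def by linarith

lemma capped_solution_eq_global:
  assumes "0 \<le> s" and "s \<le> real n"
  shows "capped_solution n s = global_x s" and "lam_cap (cap n) (capped_solution n s) = global_lam s"
proof -
  have "s \<in> {0..min (real n) (real (horizon s))}" using assms le_horizon[of s s] by simp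
  note unique = solves_on_unique[OF solves_on_mono[OF capped_solution(3)]
      solves_on_mono[OF capped_solution(3)] this]
  show "capped_solution n s = global_x s" using unique(1) by (simp add: global_x_def)
  show "lam_cap (cap n) (capped_solution n s) = global_lam s"
    using unique(2) by (simp add: global_lam_def global_x_def)
qed

lemma global_field_eq:
  assumes "0 \<le> s" and "s \<le> real n"
  shows "resolvent A (global_lam s) (global_x s) - global_x s = capped_field (cap n) (capped_solution n s)"
proof -
  have "capped_field (cap n) (capped_solution n s)
      = resolvent A (lam_cap (cap n) (capped_solution n s)) (capped_solution n s) - capped_solution n s"
    by (rule capped_field_eq[OF capped_solution(2)[OF assms(1)]])
  then show ?thesis using capped_solution_eq_global[OF assms] by simp
qed

lemma has_vector_derivative_global_x:
  assumes "0 \<le> t"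
  shows "(global_x has_vector_derivative resolvent A (global_lam t) (global_x t) - global_x t)
    (at t within {0..})"
proof -
  have "(capped_solution (horizon t) has_vector_derivative
      resolvent A (global_lam t) (global_x t) - global_x t) (at t within {0..})"
    using capped_solution(1)[OF assms] global_field_eq[OF assms le_horizon[of t t]] by simp
  then show ?thesis
    by (rule has_vector_derivative_transform_within[OF _ zero_less_one])
      (use assms capped_solution_eq_global le_horizon in auto)
qed

lemma continuous_on_global_field:
  "continuous_on {0..} (\<lambda>t. resolvent A (global_lam t) (global_x t) - global_x t)"
  unfolding continuous_on_eq_continuous_within
proof
  fix t :: real assume t: "t \<in> {0..}"
  let ?n = "horizon t"
  have "continuous_on UNIV (capped_field (cap ?n))"
    by (rule lipschitz_on_continuous_on[OF capped_field_lipschitz[OF cap_gt(1)]])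
  then have "continuous (at t within {0..}) (\<lambda>s. capped_field (cap ?n) (capped_solution ?n s))"
    using has_vector_derivative_continuous[OF capped_solution(1)] t
    by (auto intro: continuous_within_compose3 simp: continuous_on_eq_continuous_within)
  then show "continuous (at t within {0..}) (\<lambda>t. resolvent A (global_lam t) (global_x t) - global_x t)"
  proof (rule continuous_transform_within[OF _ zero_less_one t])
    fix s assume "s \<in> {0..}" "dist s t < 1"
    then show "capped_field (cap ?n) (capped_solution ?n s)
        = resolvent A (global_lam s) (global_x s) - global_x s"
      using global_field_eq[of s ?n] le_horizon[of s t] by simp
  qed
qed

lemma locally_lipschitz_global_lam: "locally_lipschitz_on {0..} global_lam"
  unfolding locally_lipschitz_on_def
proof
  fix t :: real assume "t \<in> {0..}"
  let ?n = "horizon t"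
  have "(cap_lipschitz (cap ?n) * R)-lipschitz_on (cball t (1/2) \<inter> {0..})
      (\<lambda>s. lam_cap (cap ?n) (capped_solution ?n s))"
    by (rule lipschitz_on_subset[OF lam_cap_path_lipschitz[OF cap_gt(1) capped_solution(1,2)]]) auto
  then have "(cap_lipschitz (cap ?n) * R)-lipschitz_on (cball t (1/2) \<inter> {0..}) global_lam"
    by (rule lipschitz_on_transform)
      (use capped_solution_eq_global le_horizon in \<open>auto simp: dist_commute\<close>)
  then show "\<exists>e>0. \<exists>L. L-lipschitz_on (cball t e \<inter> {0..}) global_lam" by (intro exI conjI) auto
qed

lemma global_solution: "is_cl_solution A \<theta> p x0 global_x global_lam"
  unfolding is_cl_solution_def
proof (intro conjI allI impI exI)
  fix t :: real assume "0 \<le> t"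
  have "t \<in> {0..real (horizon t)}" using le_horizon[of t t] \<open>0 \<le> t\<close> by simp
  then have "feedback (lam_cap (cap (horizon t)) (capped_solution (horizon t) t))
      (capped_solution (horizon t) t) = \<theta>"
    using capped_solution(3) unfolding solves_on_def by blast
  then show "global_lam t * norm (resolvent A (global_lam t) (global_x t) - global_x t) ^ (p - 1) = \<theta>"
    by (simp add: global_lam_def global_x_def feedback_def residual_def norm_minus_commute)
  show "0 < global_lam t" by (simp add: global_lam_def lam_cap_pos cap_gt(1))
qed (use has_vector_derivative_global_x continuous_on_global_field locally_lipschitz_global_lam
    capped_solution(3)[of "horizon 0"] in \<open>auto simp: solves_on_def global_x_def\<close>)

end

theorem theorem2p2:
  fixes A :: "'a::{real_inner, complete_space} \<Rightarrow> 'a set"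
    and \<theta> :: real and p :: nat and x0 :: 'a
  assumes "maximal_monotone A"
    and "\<exists>z. 0 \<in> A z"
    and "\<theta> > 0"
    and "p \<ge> 1"
    and "0 \<notin> A x0"
  shows "(\<exists>x lam. is_cl_solution A \<theta> p x0 x lam)
    \<and> (\<forall>x lam y mu. is_cl_solution A \<theta> p x0 x lam \<longrightarrow> is_cl_solution A \<theta> p x0 y mu \<longrightarrow>
          (\<forall>t\<ge>0. x t = y t \<and> lam t = mu t))
    \<and> (p \<ge> 2 \<longrightarrow> (\<forall>x lam. is_cl_solution A \<theta> p x0 x lam \<longrightarrow>
          (\<forall>t\<ge>0. norm (x t - resolvent A (lam t) (x t))
                   \<ge> norm (x 0 - resolvent A (lam 0) (x 0)) * exp (- t))))"
proof -
  obtain z where "0 \<in> A z" using assms(2) by blast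
  then interpret closed_loop_start A \<theta> p z x0
    using assms by unfold_locales auto
  have unique: "x t = y t \<and> lam t = mu t"
    if "is_cl_solution A \<theta> p x0 x lam" "is_cl_solution A \<theta> p x0 y mu" "0 \<le> t" for x lam y mu t
    using solves_on_unique[OF is_cl_solution_solves_on[where T = t, OF that(1)]
        is_cl_solution_solves_on[where T = t, OF that(2)]] that(3) by simp
  \<comment> \<open>The lower bound holds for every \<open>p\<close>.\<close>
  have lower: "norm (x 0 - resolvent A (lam 0) (x 0)) * exp (- t) \<le> norm (x t - resolvent A (lam t) (x t))"
    if "is_cl_solution A \<theta> p x0 x lam" "0 \<le> t" for x lam t
  proof -
    have S: "solves_on t x lam" by (rule is_cl_solution_solves_on[OF that(1)])
    then have "x 0 = x0" and "lam 0 = lam0"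
      using solves_on_initial_lam[OF _ that(2)] by (auto simp: solves_on_def)
    with solves_on_bounds(2)[OF S] that(2) show ?thesis by (simp add: u0_def residual_def)
  qed
  show ?thesis using global_solution unique lower by blast
qed

end
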